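(* Let $\mathcal{L}_\land\subseteq\{\land,\lor,\to,\lnot,0,1\}$ be a language containing $\land$ and $\Phi$ a Sahlqvist quasiequation in $\mathcal{L}_\land$. For every $\mathcal{L}_\land$-subreduct $\boldsymbol{A}$ of a Heyting algebra, $\boldsymbol{A}\vDash\Phi$ if and only if $\boldsymbol{A}_\ast\vDash\mathsf{tr}(\Phi)$.
   Context: Formulas over variables with $\land,\lor,\to,\lnot,0,1$. An occurrence of a variable is positive (negative) if the number of negations and antecedents of implications in whose scope it lies is even (odd); a formula is positive (negative) if all its variable occurrences are. A Sahlqvist antecedent is built from variables, negative formulas and $0,1$ using only $\land,\lor$. A Sahlqvist implication is a positive formula, or $\lnot\varphi$ with $\varphi$ a Sahlqvist antecedent, or $\varphi\to\psi$ with $\varphi$ a Sahlqvist antecedent and $\psi$ positive. A Sahlqvist quasiequation is $\varphi_1\land y\le z\,\&\cdots\&\,\varphi_n\land y\le z\Longrightarrow y\le z$ (universally quantified), with $y,z$ distinct variables not in the $\varphi_i$, each $\varphi_i$ built from Sahlqvist implications using only $\land,\lor$, and $a\le b$ meaning $a\land b\approx a$; it is in $\mathcal{L}_\land$ if all symbols of the $\varphi_i$ lie in $\mathcal{L}_\land$. For a poset $\mathbb{X}$, $\mathsf{Up}(\mathbb{X})$ is the Heyting algebra of upsets $\langle\mathsf{Up}(\mathbb{X});\cap,\cup,\to,\emptyset,X\rangle$ with $U\to V=X\smallsetminus{\downarrow}(U\smallsetminus V)$. For each Sahlqvist quasiequation $\Phi$, $\mathsf{tr}(\Phi)$ is the effectively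 computable first-order sentence in the language of posets (the Sahlqvist correspondent of the Gödel–McKinsey–Tarski translation of $\Phi$) satisfying, for every poset $\mathbb{X}$: $\mathsf{Up}(\mathbb{X})\vDash\Phi$ iff $\mathbb{X}\vDash\mathsf{tr}(\Phi)$. An $\mathcal{L}_\land$-subreduct of a Heyting algebra is a subalgebra of its $\mathcal{L}_\land$-reduct; for it, $\boldsymbol{A}_\ast$ is the poset (under inclusion) of meet irreducible filters, where a filter is a nonempty upset (w.r.t. $a\le b\iff a\land b=a$) closed under $\land$, meet irreducible if proper and not the intersection of two filters both different from it. *)

theory Defs
  imports Main
begin

datatype form =
    FVar nat
  | FAnd form form
  | FOr form form
  | FImp form form
  | FNeg form
  | FBot
  | FTop

datatype sym = SAnd | SOr | SImp | SNeg | SBot | STop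

fun syms :: "form \<Rightarrow> sym set" where
  "syms (FVar x) = {}"
| "syms (FAnd a b) = {SAnd} \<union> syms a \<union> syms b"
| "syms (FOr a b) = {SOr} \<union> syms a \<union> syms b"
| "syms (FImp a b) = {SImp} \<union> syms a \<union> syms b"
| "syms (FNeg a) = {SNeg} \<union> syms a"
| "syms FBot = {SBot}"
| "syms FTop = {STop}"

fun vars :: "form \<Rightarrow> nat set" where
  "vars (FVar x) = {x}"
| "vars (FAnd a b) = vars a \<union> vars b"
| "vars (FOr a b) = vars a \<union> vars b"
| "vars (FImp a b) = vars a \<union> vars b"
| "vars (FNeg a) = vars a"
| "vars FBot = {}"
| "vars FTop = {}"

fun positive :: "form \<Rightarrow> bool" and negative :: "form \<Rightarrow> bool" where
  "positive (FVar x) = True"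
| "positive (FAnd a b) = (positive a \<and> positive b)"
| "positive (FOr a b) = (positive a \<and> positive b)"
| "positive (FImp a b) = (negative a \<and> positive b)"
| "positive (FNeg a) = negative a"
| "positive FBot = True"
| "positive FTop = True"
| "negative (FVar x) = False"
| "negative (FAnd a b) = (negative a \<and> negative b)"
| "negative (FOr a b) = (negative a \<and> negative b)"
| "negative (FImp a b) = (positive a \<and> negative b)"
| "negative (FNeg a) = positive a"
| "negative FBot = True"
| "negative FTop = True"

inductive sahlqvist_antecedent :: "form \<Rightarrow> bool" where
  sa_var: "sahlqvist_antecedent (FVar x)"
| sa_neg: "negative \<phi> \<Longrightarrow> sahlqvist_antecedent \<phi>"
| sa_bot: "sahlqvist_antecedent FBot"
| sa_top: "sahlqvist_antecedent FTop"
| sa_and: "sahlqvist_antecedent \<phi> \<Longrightarrow> sahlqvist_antecedent \<psi> \<Longrightarrow> sahlqvist_antecedent (FAnd \<phi> \<psi>)"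
| sa_or: "sahlqvist_antecedent \<phi> \<Longrightarrow> sahlqvist_antecedent \<psi> \<Longrightarrow> sahlqvist_antecedent (FOr \<phi> \<psi>)"

definition sahlqvist_implication :: "form \<Rightarrow> bool" where
  "sahlqvist_implication \<chi> \<longleftrightarrow>
     positive \<chi>
   \<or> (\<exists>\<phi>. \<chi> = FNeg \<phi> \<and> sahlqvist_antecedent \<phi>)
   \<or> (\<exists>\<phi> \<psi>. \<chi> = FImp \<phi> \<psi> \<and> sahlqvist_antecedent \<phi> \<and> positive \<psi>)"

inductive sahlqvist_body :: "form \<Rightarrow> bool" where
  sb_imp: "sahlqvist_implication \<phi> \<Longrightarrow> sahlqvist_body \<phi>"
| sb_and: "sahlqvist_body \<phi> \<Longrightarrow> sahlqvist_body \<psi> \<Longrightarrow> sahlqvist_body (FAnd \<phi> \<psi>)"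
| sb_or: "sahlqvist_body \<phi> \<Longrightarrow> sahlqvist_body \<psi> \<Longrightarrow> sahlqvist_body (FOr \<phi> \<psi>)"

text \<open>The quasiequation  phi_1 and y <= z & ... & phi_n and y <= z ==> y <= z
  is represented by the list [phi_1,...,phi_n] and the variables y, z.\<close>
datatype qeq = QEq "form list" nat nat

fun sahlqvist_qeq :: "qeq \<Rightarrow> bool" where
  "sahlqvist_qeq (QEq \<phi>s y z) \<longleftrightarrow>
     \<phi>s \<noteq> [] \<and> y \<noteq> z \<and>
     (\<forall>\<phi> \<in> set \<phi>s. sahlqvist_body \<phi> \<and> y \<notin> vars \<phi> \<and> z \<notin> vars \<phi>)"

fun qeq_in_language :: "sym set \<Rightarrow> qeq \<Rightarrow> bool" where
  "qeq_in_language L (QEq \<phi>s y z) \<longleftrightarrow> (\<forall>\<phi> \<in> set \<phi>s. syms \<phi> \<subseteq> L)"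

record 'a alg =
  carrier :: "'a set"
  meet :: "'a \<Rightarrow> 'a \<Rightarrow> 'a"
  join :: "'a \<Rightarrow> 'a \<Rightarrow> 'a"
  imp :: "'a \<Rightarrow> 'a \<Rightarrow> 'a"
  neg :: "'a \<Rightarrow> 'a"
  bot :: "'a"
  top :: "'a"

fun eval :: "'a alg \<Rightarrow> (nat \<Rightarrow> 'a) \<Rightarrow> form \<Rightarrow> 'a" where
  "eval H v (FVar x) = v x"
| "eval H v (FAnd a b) = meet H (eval H v a) (eval H v b)"
| "eval H v (FOr a b) = join H (eval H v a) (eval H v b)"
| "eval H v (FImp a b) = imp H (eval H v a) (eval H v b)"
| "eval H v (FNeg a) = neg H (eval H v a)"
| "eval H v FBot = bot H"
| "eval H v FTop = top H"

definition alg_le :: "'a alg \<Rightarrow> 'a \<Rightarrow> 'a \<Rightarrow> bool" where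
  "alg_le H a b \<longleftrightarrow> meet H a b = a"

text \<open>Validity of a quasiequation in the algebra with operations of H and universe S
  (the universally quantified variables range over S).\<close>
fun qeq_valid :: "'a alg \<Rightarrow> 'a set \<Rightarrow> qeq \<Rightarrow> bool" where
  "qeq_valid H S (QEq \<phi>s y z) \<longleftrightarrow>
     (\<forall>v. (\<forall>x. v x \<in> S) \<longrightarrow>
        (\<forall>\<phi> \<in> set \<phi>s. alg_le H (meet H (eval H v \<phi>) (v y)) (v z)) \<longrightarrow>
        alg_le H (v y) (v z))"

definition heyting_algebra :: "'a alg \<Rightarrow> bool" where
  "heyting_algebra H \<longleftrightarrow>
     (let C = carrier H; le = alg_le H in
      bot H \<in> C \<and> top H \<in> C \<and>
      (\<forall>a\<in>C. \<forall>b\<in>C. meet H a b \<in> C \<and> join H a b \<in> C \<and> imp H a b \<in> C) \<and>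
      (\<forall>a\<in>C. neg H a \<in> C) \<and>
      (\<forall>a\<in>C. \<forall>b\<in>C. meet H a b = meet H b a \<and> join H a b = join H b a) \<and>
      (\<forall>a\<in>C. \<forall>b\<in>C. \<forall>c\<in>C. meet H (meet H a b) c = meet H a (meet H b c)
                       \<and> join H (join H a b) c = join H a (join H b c)) \<and>
      (\<forall>a\<in>C. \<forall>b\<in>C. meet H a (join H a b) = a \<and> join H a (meet H a b) = a) \<and>
      (\<forall>a\<in>C. le (bot H) a \<and> le a (top H)) \<and>
      (\<forall>a\<in>C. \<forall>b\<in>C. \<forall>c\<in>C. le (meet H c a) b \<longleftrightarrow> le c (imp H a b)) \<and>
      (\<forall>a\<in>C. neg H a = imp H a (bot H)))"

definition subreduct :: "sym set \<Rightarrow> 'a alg \<Rightarrow> 'a set \<Rightarrow> bool" where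
  "subreduct L H S \<longleftrightarrow>
     heyting_algebra H \<and> S \<subseteq> carrier H \<and> S \<noteq> {} \<and>
     (SAnd \<in> L \<longrightarrow> (\<forall>a\<in>S. \<forall>b\<in>S. meet H a b \<in> S)) \<and>
     (SOr \<in> L \<longrightarrow> (\<forall>a\<in>S. \<forall>b\<in>S. join H a b \<in> S)) \<and>
     (SImp \<in> L \<longrightarrow> (\<forall>a\<in>S. \<forall>b\<in>S. imp H a b \<in> S)) \<and>
     (SNeg \<in> L \<longrightarrow> (\<forall>a\<in>S. neg H a \<in> S)) \<and>
     (SBot \<in> L \<longrightarrow> bot H \<in> S) \<and>
     (STop \<in> L \<longrightarrow> top H \<in> S)"

definition is_filter :: "'a alg \<Rightarrow> 'a set \<Rightarrow> 'a set \<Rightarrow> bool" where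
  "is_filter H S F \<longleftrightarrow>
     F \<subseteq> S \<and> F \<noteq> {} \<and>
     (\<forall>a\<in>F. \<forall>b\<in>S. alg_le H a b \<longrightarrow> b \<in> F) \<and>
     (\<forall>a\<in>F. \<forall>b\<in>F. meet H a b \<in> F)"

definition meet_irreducible_filter :: "'a alg \<Rightarrow> 'a set \<Rightarrow> 'a set \<Rightarrow> bool" where
  "meet_irreducible_filter H S F \<longleftrightarrow>
     is_filter H S F \<and> F \<noteq> S \<and>
     \<not> (\<exists>G1 G2. is_filter H S G1 \<and> is_filter H S G2 \<and> G1 \<noteq> F \<and> G2 \<noteq> F \<and> F = G1 \<inter> G2)"

text \<open>Universe of A_*; its order is set inclusion.\<close>
definition dual_poset :: "'a alg \<Rightarrow> 'a set \<Rightarrow> 'a set set" where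
  "dual_poset H S = {F. meet_irreducible_filter H S F}"

definition is_poset :: "'b set \<Rightarrow> ('b \<Rightarrow> 'b \<Rightarrow> bool) \<Rightarrow> bool" where
  "is_poset X le \<longleftrightarrow>
     (\<forall>x\<in>X. le x x) \<and>
     (\<forall>x\<in>X. \<forall>y\<in>X. le x y \<and> le y x \<longrightarrow> x = y) \<and>
     (\<forall>x\<in>X. \<forall>y\<in>X. \<forall>z\<in>X. le x y \<and> le y z \<longrightarrow> le x z)"

definition upsets :: "'b set \<Rightarrow> ('b \<Rightarrow> 'b \<Rightarrow> bool) \<Rightarrow> 'b set set" where
  "upsets X le = {U. U \<subseteq> X \<and> (\<forall>x\<in>U. \<forall>y\<in>X. le x y \<longrightarrow> y \<in> U)}"

definition downclosure :: "'b set \<Rightarrow> ('b \<Rightarrow> 'b \<Rightarrow> bool) \<Rightarrow> 'b set \<Rightarrow> 'b set" where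
  "downclosure X le U = {x\<in>X. \<exists>u\<in>U. le x u}"

definition Up :: "'b set \<Rightarrow> ('b \<Rightarrow> 'b \<Rightarrow> bool) \<Rightarrow> 'b set alg" where
  "Up X le =
     \<lparr> carrier = upsets X le,
       meet = (\<inter>), join = (\<union>),
       imp = (\<lambda>U V. X - downclosure X le (U - V)),
       neg = (\<lambda>U. X - downclosure X le U),
       bot = {}, top = X \<rparr>"

datatype fo =
    FO_Le nat nat
  | FO_Eq nat nat
  | FO_Not fo
  | FO_Conj fo fo
  | FO_Disj fo fo
  | FO_Impl fo fo
  | FO_Ex nat fo
  | FO_All nat fo

fun fo_free :: "fo \<Rightarrow> nat set" where
  "fo_free (FO_Le x y) = {x, y}"
| "fo_free (FO_Eq x y) = {x, y}"
| "fo_free (FO_Not a) = fo_free a"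
| "fo_free (FO_Conj a b) = fo_free a \<union> fo_free b"
| "fo_free (FO_Disj a b) = fo_free a \<union> fo_free b"
| "fo_free (FO_Impl a b) = fo_free a \<union> fo_free b"
| "fo_free (FO_Ex x a) = fo_free a - {x}"
| "fo_free (FO_All x a) = fo_free a - {x}"

definition fo_sentence :: "fo \<Rightarrow> bool" where
  "fo_sentence \<tau> \<longleftrightarrow> fo_free \<tau> = {}"

fun fo_holds :: "'b set \<Rightarrow> ('b \<Rightarrow> 'b \<Rightarrow> bool) \<Rightarrow> (nat \<Rightarrow> 'b) \<Rightarrow> fo \<Rightarrow> bool" where
  "fo_holds X le g (FO_Le x y) = le (g x) (g y)"
| "fo_holds X le g (FO_Eq x y) = (g x = g y)"
| "fo_holds X le g (FO_Not a) = (\<not> fo_holds X le g a)"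
| "fo_holds X le g (FO_Conj a b) = (fo_holds X le g a \<and> fo_holds X le g b)"
| "fo_holds X le g (FO_Disj a b) = (fo_holds X le g a \<or> fo_holds X le g b)"
| "fo_holds X le g (FO_Impl a b) = (fo_holds X le g a \<longrightarrow> fo_holds X le g b)"
| "fo_holds X le g (FO_Ex x a) = (\<exists>d\<in>X. fo_holds X le (g(x := d)) a)"
| "fo_holds X le g (FO_All x a) = (\<forall>d\<in>X. fo_holds X le (g(x := d)) a)"

text \<open>Satisfaction of a sentence (the assignment is irrelevant for sentences).\<close>
definition fo_models :: "'b set \<Rightarrow> ('b \<Rightarrow> 'b \<Rightarrow> bool) \<Rightarrow> fo \<Rightarrow> bool" where
  "fo_models X le \<tau> \<longleftrightarrow> fo_holds X le (\<lambda>_. undefined) \<tau>"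

definition correspondent :: "'b itself \<Rightarrow> qeq \<Rightarrow> fo \<Rightarrow> bool" where
  "correspondent _ \<Phi> \<tau> \<longleftrightarrow>
     fo_sentence \<tau> \<and>
     (\<forall>(X::'b set) le. is_poset X le \<longrightarrow>
        (qeq_valid (Up X le) (upsets X le) \<Phi> \<longleftrightarrow> fo_models X le \<tau>))"

end

theory Submission
  imports Defs
begin

text \<open>
  The meet-irreducible filters of \<open>A\<close> separate its elements, and \<open>a \<mapsto> {K. a \<in> K}\<close> embeds
  \<open>A\<close> into \<open>Up(A\<^sub>*)\<close> preserving the operations of the language: meets because filters are
  closed under meets, joins because meet-irreducible filters are prime, implications and
  negations by extending filters with Zorn's lemma. So a quasiequation valid in \<open>Up(A\<^sub>*)\<close> is
  valid in \<open>A\<close>.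

  Conversely, let \<open>A\<close> satisfy the Sahlqvist quasiequation and let a valuation \<open>V\<close> in
  \<open>Up(A\<^sub>*)\<close> and a point \<open>F \<in> V y - V z\<close> refute it. As in Sahlqvist canonicity, the minimal
  valuations generated by finitely many points above \<open>F\<close> are approximated from above by
  valuations \<open>w\<close> into \<open>A\<close>: by compactness, positive formulas evaluate to the intersection and
  negative ones to the union of the sets \<open>rep (eval w \<rho>)\<close>. Since the premises are built from
  Sahlqvist implications, this yields a valuation \<open>w\<close> into \<open>A\<close> with \<open>eval w \<phi>\<^sub>i \<notin> F\<close> for all
  \<open>i\<close>. Meet-irreducibility of \<open>F\<close> provides \<open>f \<in> F\<close> and \<open>c \<notin> F\<close> with
  \<open>eval w \<phi>\<^sub>i \<sqinter> f \<preceq> c\<close> for all \<open>i\<close>, and the instance \<open>y := f, z := c\<close> of the quasiequation in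
  \<open>A\<close> forces \<open>f \<preceq> c\<close>, contradicting \<open>c \<notin> F\<close>.

  Finally \<open>Up(A\<^sub>*)\<close> satisfies the quasiequation iff \<open>A\<^sub>*\<close> satisfies the correspondent, which
  is stated for posets on another type and is reached through the embedding \<open>K \<mapsto> {K}\<close>.
\<close>

section \<open>Heyting algebras\<close>

locale heyting =
  fixes H :: "'a alg"
  assumes heyting: "heyting_algebra H"
begin

abbreviation hmeet (infixl "\<sqinter>" 70) where "a \<sqinter> b \<equiv> meet H a b"
abbreviation hjoin (infixl "\<squnion>" 65) where "a \<squnion> b \<equiv> join H a b"
abbreviation himp (infixr "\<rightarrow>" 60) where "a \<rightarrow> b \<equiv> imp H a b"
abbreviation hle (infix "\<preceq>" 50) where "a \<preceq> b \<equiv> alg_le H a b"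
abbreviation "A \<equiv> carrier H"

lemma bot_closed: "bot H \<in> A"
  and top_closed: "top H \<in> A"
  and meet_closed: "a \<in> A \<Longrightarrow> b \<in> A \<Longrightarrow> a \<sqinter> b \<in> A"
  and join_closed: "a \<in> A \<Longrightarrow> b \<in> A \<Longrightarrow> a \<squnion> b \<in> A"
  and imp_closed: "a \<in> A \<Longrightarrow> b \<in> A \<Longrightarrow> a \<rightarrow> b \<in> A"
  and neg_closed: "a \<in> A \<Longrightarrow> neg H a \<in> A"
  and meet_comm: "a \<in> A \<Longrightarrow> b \<in> A \<Longrightarrow> a \<sqinter> b = b \<sqinter> a"
  and join_comm: "a \<in> A \<Longrightarrow> b \<in> A \<Longrightarrow> a \<squnion> b = b \<squnion> a"
  and meet_assoc: "a \<in> A \<Longrightarrow> b \<in> A \<Longrightarrow> c \<in> A \<Longrightarrow> a \<sqinter> b \<sqinter> c = a \<sqinter> (b \<sqinter> c)"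
  and join_assoc: "a \<in> A \<Longrightarrow> b \<in> A \<Longrightarrow> c \<in> A \<Longrightarrow> a \<squnion> b \<squnion> c = a \<squnion> (b \<squnion> c)"
  and meet_absorb: "a \<in> A \<Longrightarrow> b \<in> A \<Longrightarrow> a \<sqinter> (a \<squnion> b) = a"
  and join_absorb: "a \<in> A \<Longrightarrow> b \<in> A \<Longrightarrow> a \<squnion> (a \<sqinter> b) = a"
  and bot_le: "a \<in> A \<Longrightarrow> bot H \<preceq> a"
  and le_top: "a \<in> A \<Longrightarrow> a \<preceq> top H"
  and residuation: "a \<in> A \<Longrightarrow> b \<in> A \<Longrightarrow> c \<in> A \<Longrightarrow> c \<sqinter> a \<preceq> b \<longleftrightarrow> c \<preceq> a \<rightarrow> b"
  and neg_eq_imp_bot: "a \<in> A \<Longrightarrow> neg H a = a \<rightarrow> bot H"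
  using heyting unfolding heyting_algebra_def Let_def by blast+

lemma meet_idem: "a \<in> A \<Longrightarrow> a \<sqinter> a = a"
  using meet_absorb[of a "a \<sqinter> a"] join_absorb[of a a] meet_closed by simp

lemma hle_refl: "a \<in> A \<Longrightarrow> a \<preceq> a"
  by (simp add: alg_le_def meet_idem)

lemma hle_antisym: "a \<in> A \<Longrightarrow> b \<in> A \<Longrightarrow> a \<preceq> b \<Longrightarrow> b \<preceq> a \<Longrightarrow> a = b"
  unfolding alg_le_def using meet_comm by force

lemma hle_trans: "a \<in> A \<Longrightarrow> b \<in> A \<Longrightarrow> c \<in> A \<Longrightarrow> a \<preceq> b \<Longrightarrow> b \<preceq> c \<Longrightarrow> a \<preceq> c"
  unfolding alg_le_def using meet_assoc by metis

lemma le_meet_iff: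
  assumes "a \<in> A" "b \<in> A" "c \<in> A" shows "c \<preceq> a \<sqinter> b \<longleftrightarrow> c \<preceq> a \<and> c \<preceq> b"
proof
  assume "c \<preceq> a \<sqinter> b"
  then have "c = c \<sqinter> a \<sqinter> b" using assms unfolding alg_le_def by (simp add: meet_assoc)
  then show "c \<preceq> a \<and> c \<preceq> b"
    using assms unfolding alg_le_def
    by (metis meet_assoc meet_closed meet_comm meet_idem)
next
  assume "c \<preceq> a \<and> c \<preceq> b"
  then show "c \<preceq> a \<sqinter> b" using assms unfolding alg_le_def by (metis meet_assoc)
qed

lemma meet_le1: "a \<in> A \<Longrightarrow> b \<in> A \<Longrightarrow> a \<sqinter> b \<preceq> a"
  and meet_le2: "a \<in> A \<Longrightarrow> b \<in> A \<Longrightarrow> a \<sqinter> b \<preceq> b"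
  using le_meet_iff hle_refl meet_closed by blast+

lemma le_iff_join: "a \<in> A \<Longrightarrow> b \<in> A \<Longrightarrow> a \<preceq> b \<longleftrightarrow> a \<squnion> b = b"
  unfolding alg_le_def by (metis join_absorb join_comm meet_absorb meet_comm)

lemma join_le_iff:
  assumes "a \<in> A" "b \<in> A" "c \<in> A" shows "a \<squnion> b \<preceq> c \<longleftrightarrow> a \<preceq> c \<and> b \<preceq> c"
proof
  assume "a \<squnion> b \<preceq> c"
  then have "a \<squnion> (b \<squnion> c) = c" using assms by (simp add: le_iff_join join_closed join_assoc)
  then show "a \<preceq> c \<and> b \<preceq> c"
    using assms unfolding le_iff_join[OF assms(1,3)] le_iff_join[OF assms(2,3)]
    by (metis join_absorb join_assoc join_closed join_comm meet_absorb)
next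
  assume "a \<preceq> c \<and> b \<preceq> c"
  then show "a \<squnion> b \<preceq> c" using assms by (simp add: le_iff_join join_closed join_assoc)
qed

lemma join_ge1: "a \<in> A \<Longrightarrow> b \<in> A \<Longrightarrow> a \<preceq> a \<squnion> b"
  and join_ge2: "a \<in> A \<Longrightarrow> b \<in> A \<Longrightarrow> b \<preceq> a \<squnion> b"
  using join_le_iff hle_refl join_closed by blast+

lemma modus_ponens:
  assumes "a \<in> A" "b \<in> A" shows "a \<sqinter> (a \<rightarrow> b) \<preceq> b"
proof -
  have "(a \<rightarrow> b) \<sqinter> a \<preceq> b"
    using residuation[of a b "a \<rightarrow> b"] hle_refl[of "a \<rightarrow> b"] assms imp_closed by blast
  then show ?thesis using meet_comm[of a "a \<rightarrow> b"] assms imp_closed by simp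
qed

lemma meet_mono:
  assumes "a \<in> A" "b \<in> A" "a' \<in> A" "b' \<in> A" "a \<preceq> a'" "b \<preceq> b'"
  shows "a \<sqinter> b \<preceq> a' \<sqinter> b'"
proof -
  have "a \<sqinter> b \<preceq> a'" using hle_trans[of "a \<sqinter> b" a a'] meet_le1 meet_closed assms by blast
  moreover have "a \<sqinter> b \<preceq> b'" using hle_trans[of "a \<sqinter> b" b b'] meet_le2 meet_closed assms by blast
  ultimately show ?thesis using le_meet_iff meet_closed assms by blast
qed

lemma join_mono:
  assumes "a \<in> A" "b \<in> A" "a' \<in> A" "b' \<in> A" "a \<preceq> a'" "b \<preceq> b'"
  shows "a \<squnion> b \<preceq> a' \<squnion> b'"
proof -
  have "a \<preceq> a' \<squnion> b'" using hle_trans[of a a' "a' \<squnion> b'"] join_ge1 join_closed assms by blast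
  moreover have "b \<preceq> a' \<squnion> b'" using hle_trans[of b b' "a' \<squnion> b'"] join_ge2 join_closed assms by blast
  ultimately show ?thesis using join_le_iff join_closed assms by blast
qed

lemma imp_mono:
  assumes "a \<in> A" "b \<in> A" "a' \<in> A" "b' \<in> A" "a' \<preceq> a" "b \<preceq> b'"
  shows "a \<rightarrow> b \<preceq> a' \<rightarrow> b'"
proof -
  have ab: "a \<rightarrow> b \<in> A" using assms imp_closed by blast
  have "(a \<rightarrow> b) \<sqinter> a' \<preceq> a \<sqinter> (a \<rightarrow> b)"
    using meet_mono[OF ab assms(3) ab assms(1) hle_refl[OF ab] assms(5)] meet_comm[OF assms(1) ab]
      by simp
  then have "(a \<rightarrow> b) \<sqinter> a' \<preceq> b"
    using hle_trans[of "(a \<rightarrow> b) \<sqinter> a'" "a \<sqinter> (a \<rightarrow> b)" b] modus_ponens assms ab meet_closed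
    by blast
  then have "(a \<rightarrow> b) \<sqinter> a' \<preceq> b'"
    using hle_trans[of "(a \<rightarrow> b) \<sqinter> a'" b b'] assms ab meet_closed by blast
  then show ?thesis using assms ab residuation by blast
qed

lemma neg_antimono: "\<lbrakk>a \<in> A; a' \<in> A; a' \<preceq> a\<rbrakk> \<Longrightarrow> neg H a \<preceq> neg H a'"
  using imp_mono[OF _ bot_closed _ bot_closed _ hle_refl[OF bot_closed]]
    by (simp add: neg_eq_imp_bot)

lemma meet_neg_eq_bot:
  assumes "a \<in> A" shows "a \<sqinter> neg H a = bot H"
proof -
  have "a \<sqinter> neg H a \<preceq> bot H" using modus_ponens[OF assms bot_closed] assms
    by (simp add: neg_eq_imp_bot)
  moreover have "a \<sqinter> neg H a \<in> A" using assms by (simp add: meet_closed neg_closed)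
  ultimately show ?thesis using hle_antisym bot_le bot_closed by blast
qed

lemma meet_join_le:
  assumes "k \<in> A" "a \<in> A" "b \<in> A" shows "k \<sqinter> (a \<squnion> b) \<preceq> (k \<sqinter> a) \<squnion> (k \<sqinter> b)"
proof -
  let ?r = "(k \<sqinter> a) \<squnion> (k \<sqinter> b)"
  have r: "?r \<in> A" using assms by (simp add: join_closed meet_closed)
  have "a \<sqinter> k \<preceq> ?r" "b \<sqinter> k \<preceq> ?r"
    using join_ge1[of "k \<sqinter> a" "k \<sqinter> b"] join_ge2[of "k \<sqinter> a" "k \<sqinter> b"]
      meet_comm[of a k] meet_comm[of b k] meet_closed assms by simp_all
  then have "a \<preceq> k \<rightarrow> ?r" "b \<preceq> k \<rightarrow> ?r" using assms r residuation by blast+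
  then have "a \<squnion> b \<preceq> k \<rightarrow> ?r" using assms r join_le_iff imp_closed by blast
  then have "(a \<squnion> b) \<sqinter> k \<preceq> ?r" using assms r residuation join_closed by blast
  then show ?thesis using assms meet_comm[of "a \<squnion> b" k] join_closed by simp
qed

lemma eval_closed: "(\<And>x. v x \<in> A) \<Longrightarrow> eval H v \<phi> \<in> A"
  by (induction \<phi>) (auto simp: meet_closed join_closed imp_closed neg_closed bot_closed top_closed)

lemma eval_mono:
  assumes v: "\<And>x. v x \<in> A" and w: "\<And>x. w x \<in> A" and vw: "\<And>x. v x \<preceq> w x"
  shows "(positive \<phi> \<longrightarrow> eval H v \<phi> \<preceq> eval H w \<phi>) \<and> (negative \<phi> \<longrightarrow> eval H w \<phi> \<preceq> eval H v \<phi>)"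
proof (induction \<phi>)
  case (FAnd \<phi> \<psi>)
  then show ?case using meet_mono eval_closed[OF v] eval_closed[OF w] by simp
next
  case (FOr \<phi> \<psi>)
  then show ?case using join_mono eval_closed[OF v] eval_closed[OF w] by simp
next
  case (FImp \<phi> \<psi>)
  then show ?case using imp_mono eval_closed[OF v] eval_closed[OF w] by simp
next
  case (FNeg \<phi>)
  then show ?case using neg_antimono eval_closed[OF v] eval_closed[OF w] by simp
qed (simp_all add: vw hle_refl bot_closed top_closed)

lemma meet_le_antimono:
  assumes "k \<in> A" "k' \<in> A" "a \<in> A" "c \<in> A" "k' \<preceq> k" "k \<sqinter> a \<preceq> c"
  shows "k' \<sqinter> a \<preceq> c"
  using assms residuation hle_trans imp_closed by meson

definition down_directed :: "'a set \<Rightarrow> bool" where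
  "down_directed D \<longleftrightarrow> D \<noteq> {} \<and> (\<forall>d1\<in>D. \<forall>d2\<in>D. \<exists>d\<in>D. d \<preceq> d1 \<and> d \<preceq> d2)"

definition up_directed :: "'a set \<Rightarrow> bool" where
  "up_directed E \<longleftrightarrow> E \<noteq> {} \<and> (\<forall>e1\<in>E. \<forall>e2\<in>E. \<exists>e\<in>E. e1 \<preceq> e \<and> e2 \<preceq> e)"

lemma singleton_directed: "a \<in> A \<Longrightarrow> down_directed {a} \<and> up_directed {a}"
  unfolding down_directed_def up_directed_def using hle_refl by blast

end

section \<open>Filters of an L-subreduct\<close>

locale L_subreduct = heyting H for H :: "'a alg" +
  fixes L :: "sym set" and S :: "'a set"
  assumes subreduct: "subreduct L H S" and and_in_L: "SAnd \<in> L"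
begin

abbreviation X :: "'a set set" where "X \<equiv> dual_poset H S"

lemma S_subset: "S \<subseteq> A" and S_nonempty: "S \<noteq> {}"
  using subreduct unfolding subreduct_def by blast+

lemma in_A [simp]: "a \<in> S \<Longrightarrow> a \<in> A"
  using S_subset by blast

lemma meet_in_S: "a \<in> S \<Longrightarrow> b \<in> S \<Longrightarrow> a \<sqinter> b \<in> S"
  using subreduct and_in_L unfolding subreduct_def by blast

lemma join_in_S: "SOr \<in> L \<Longrightarrow> a \<in> S \<Longrightarrow> b \<in> S \<Longrightarrow> a \<squnion> b \<in> S"
  and imp_in_S: "SImp \<in> L \<Longrightarrow> a \<in> S \<Longrightarrow> b \<in> S \<Longrightarrow> a \<rightarrow> b \<in> S"
  and neg_in_S: "SNeg \<in> L \<Longrightarrow> a \<in> S \<Longrightarrow> neg H a \<in> S"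
  and bot_in_S: "SBot \<in> L \<Longrightarrow> bot H \<in> S"
  and top_in_S: "STop \<in> L \<Longrightarrow> top H \<in> S"
  using subreduct unfolding subreduct_def by blast+

lemma bot_in_S_if_neg: "SNeg \<in> L \<Longrightarrow> bot H \<in> S"
  using S_nonempty meet_in_S neg_in_S meet_neg_eq_bot by fastforce

lemma eval_in_S: "syms \<phi> \<subseteq> L \<Longrightarrow> (\<And>x. v x \<in> S) \<Longrightarrow> eval H v \<phi> \<in> S"
  by (induction \<phi>) (auto simp: meet_in_S join_in_S imp_in_S neg_in_S bot_in_S top_in_S)


lemma filter_subset: "is_filter H S G \<Longrightarrow> G \<subseteq> S"
  and filter_nonempty: "is_filter H S G \<Longrightarrow> G \<noteq> {}"
  and filter_up: "is_filter H S G \<Longrightarrow> a \<in> G \<Longrightarrow> b \<in> S \<Longrightarrow> a \<preceq> b \<Longrightarrow> b \<in> G"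
  and filter_meet: "is_filter H S G \<Longrightarrow> a \<in> G \<Longrightarrow> b \<in> G \<Longrightarrow> a \<sqinter> b \<in> G"
  unfolding is_filter_def by blast+

lemma filter_meet_iff: "is_filter H S G \<Longrightarrow> a \<in> S \<Longrightarrow> b \<in> S \<Longrightarrow> a \<sqinter> b \<in> G \<longleftrightarrow> a \<in> G \<and> b \<in> G"
  using filter_up filter_meet meet_le1 meet_le2 by (meson in_A)

lemma filter_Int:
  "is_filter H S G1 \<Longrightarrow> is_filter H S G2 \<Longrightarrow> G1 \<inter> G2 \<noteq> {} \<Longrightarrow> is_filter H S (G1 \<inter> G2)"
  unfolding is_filter_def by blast

lemma principal_filter:
  assumes "a \<in> S" shows "is_filter H S {s \<in> S. a \<preceq> s}"
  unfolding is_filter_def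
proof (intro conjI ballI impI)
  show "{s \<in> S. a \<preceq> s} \<noteq> {}" using assms hle_refl by auto
  show "c \<in> {s \<in> S. a \<preceq> s}" if "b \<in> {s \<in> S. a \<preceq> s}" "c \<in> S" "b \<preceq> c" for b c
    using that assms hle_trans[of a b c] by simp
  show "b \<sqinter> c \<in> {s \<in> S. a \<preceq> s}" if "b \<in> {s \<in> S. a \<preceq> s}" "c \<in> {s \<in> S. a \<preceq> s}" for b c
    using that assms le_meet_iff[of b c a] meet_in_S by simp
qed blast

definition gen_filter :: "'a set \<Rightarrow> 'a set \<Rightarrow> 'a set" where
  "gen_filter K D = {s \<in> S. \<exists>k\<in>K. \<exists>d\<in>D. k \<sqinter> d \<preceq> s}"

lemma gen_filter:
  assumes K: "is_filter H S K" and D: "D \<subseteq> S" "down_directed D"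
  shows "is_filter H S (gen_filter K D)" and "K \<subseteq> gen_filter K D" and "D \<subseteq> gen_filter K D"
proof -
  have KS: "K \<subseteq> S" using filter_subset[OF K] .
  obtain k0 where k0: "k0 \<in> K" using filter_nonempty[OF K] by blast
  obtain d0 where d0: "d0 \<in> D" using D(2) unfolding down_directed_def by blast
  show "K \<subseteq> gen_filter K D"
    unfolding gen_filter_def using KS D(1) d0 meet_le1 by (fastforce simp del: in_A intro: in_A)
  show "D \<subseteq> gen_filter K D"
    unfolding gen_filter_def using KS D(1) k0 meet_le2 by (fastforce simp del: in_A intro: in_A)
  show "is_filter H S (gen_filter K D)"
    unfolding is_filter_def
  proof (intro conjI ballI impI)
    show "gen_filter K D \<subseteq> S" unfolding gen_filter_def by blast
    show "gen_filter K D \<noteq> {}" using \<open>K \<subseteq> gen_filter K D\<close> k0 by blast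
  next
    fix a b assume "a \<in> gen_filter K D" "b \<in> S" "a \<preceq> b"
    then show "b \<in> gen_filter K D"
      unfolding gen_filter_def using KS D(1) hle_trans meet_closed by (blast intro: in_A)
  next
    fix a b assume a: "a \<in> gen_filter K D" and b: "b \<in> gen_filter K D"
    obtain k1 d1 where 1: "k1 \<in> K" "d1 \<in> D" "k1 \<sqinter> d1 \<preceq> a" "a \<in> S"
      using a unfolding gen_filter_def by blast
    obtain k2 d2 where 2: "k2 \<in> K" "d2 \<in> D" "k2 \<sqinter> d2 \<preceq> b" "b \<in> S"
      using b unfolding gen_filter_def by blast
    obtain d where d: "d \<in> D" "d \<preceq> d1" "d \<preceq> d2"
      using D(2) 1(2) 2(2) unfolding down_directed_def by blast
    have S: "k1 \<in> S" "k2 \<in> S" "d \<in> S" "d1 \<in> S" "d2 \<in> S" using 1 2 d KS D(1) by blast+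
    have "k1 \<sqinter> k2 \<preceq> k1" "k1 \<sqinter> k2 \<preceq> k2" using S meet_le1 meet_le2 by simp_all
    then have "k1 \<sqinter> k2 \<sqinter> d \<preceq> k1 \<sqinter> d1" "k1 \<sqinter> k2 \<sqinter> d \<preceq> k2 \<sqinter> d2"
      using S d meet_mono meet_closed by simp_all
    then have "k1 \<sqinter> k2 \<sqinter> d \<preceq> a" "k1 \<sqinter> k2 \<sqinter> d \<preceq> b"
      using 1 2 S hle_trans meet_closed by (meson in_A)+
    then have "k1 \<sqinter> k2 \<sqinter> d \<preceq> a \<sqinter> b" using 1 2 S le_meet_iff meet_closed by simp
    then show "a \<sqinter> b \<in> gen_filter K D"
      unfolding gen_filter_def using 1 2 d filter_meet[OF K] meet_in_S by blast
  qed
qed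

lemma gen_filter_singleton:
  assumes "is_filter H S K" "a \<in> S"
  shows "is_filter H S (gen_filter K {a})" "K \<subseteq> gen_filter K {a}" "a \<in> gen_filter K {a}"
  using gen_filter[of K "{a}"] assms singleton_directed[of a] by auto

section \<open>Meet-irreducible filters\<close>

lemma dual_filter: "K \<in> X \<Longrightarrow> is_filter H S K"
  unfolding dual_poset_def meet_irreducible_filter_def by simp

lemma dual_proper: "K \<in> X \<Longrightarrow> \<exists>a\<in>S. a \<notin> K"
  unfolding dual_poset_def meet_irreducible_filter_def using filter_subset by blast

lemma dual_irreducible:
  assumes "K \<in> X" "is_filter H S G1" "is_filter H S G2" "K \<subseteq> G1" "K \<subseteq> G2" "G1 \<noteq> K" "G2 \<noteq> K"
  shows "\<exists>c\<in>G1 \<inter> G2. c \<notin> K"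
proof -
  have "K \<noteq> G1 \<inter> G2"
    using assms(1-3,6,7) unfolding dual_poset_def meet_irreducible_filter_def by blast
  then show ?thesis using assms(4,5) by blast
qed

lemma bot_notin_dual:
  assumes "K \<in> X" shows "bot H \<notin> K"
proof
  assume "bot H \<in> K"
  then have "S \<subseteq> K" using filter_up[OF dual_filter[OF assms]] bot_le by (meson in_A subsetI)
  then show False using dual_proper[OF assms] by blast
qed

lemma top_in_dual:
  assumes "K \<in> X" "top H \<in> S" shows "top H \<in> K"
proof -
  obtain k where "k \<in> K" using filter_nonempty[OF dual_filter[OF assms(1)]] by blast
  moreover have "k \<in> S" using calculation filter_subset[OF dual_filter[OF assms(1)]] by blast
  ultimately show ?thesis using filter_up[OF dual_filter[OF assms(1)]] le_top assms(2) by simp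
qed

lemma maximal_filter_disjoint:
  assumes "is_filter H S G0" "G0 \<inter> E = {}"
  obtains K where "is_filter H S K" "G0 \<subseteq> K" "K \<inter> E = {}"
    "\<And>G. is_filter H S G \<Longrightarrow> K \<subseteq> G \<Longrightarrow> G \<inter> E = {} \<Longrightarrow> G = K"
proof -
  let ?F = "{G. is_filter H S G \<and> G0 \<subseteq> G \<and> G \<inter> E = {}}"
  have "\<exists>K\<in>?F. \<forall>G\<in>?F. K \<subseteq> G \<longrightarrow> G = K"
  proof (rule subset_Zorn_nonempty)
    show "?F \<noteq> {}" using assms by blast
  next
    fix Ch assume ne: "Ch \<noteq> {}" and ch: "subset.chain ?F Ch"
    have filters: "\<And>G. G \<in> Ch \<Longrightarrow> is_filter H S G" and ChF: "Ch \<subseteq> ?F"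
      using ch unfolding subset_chain_def by blast+
    have "is_filter H S (\<Union>Ch)"
      unfolding is_filter_def
    proof (intro conjI ballI impI)
      show "\<Union>Ch \<subseteq> S" using filters filter_subset by blast
      show "\<Union>Ch \<noteq> {}" using ne filters filter_nonempty by blast
    next
      fix a b assume "a \<in> \<Union>Ch" "b \<in> S" "a \<preceq> b"
      then show "b \<in> \<Union>Ch" using filters filter_up by blast
    next
      fix a b assume "a \<in> \<Union>Ch" "b \<in> \<Union>Ch"
      then obtain G1 G2 where G: "G1 \<in> Ch" "G2 \<in> Ch" "a \<in> G1" "b \<in> G2" by blast
      then have "G1 \<subseteq> G2 \<or> G2 \<subseteq> G1" using ch unfolding subset_chain_def by blast
      then show "a \<sqinter> b \<in> \<Union>Ch" using G filters filter_meet by blast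
    qed
    moreover have "G0 \<subseteq> \<Union>Ch" "\<Union>Ch \<inter> E = {}" using ne ChF by blast+
    ultimately show "\<Union>Ch \<in> ?F" by blast
  qed
  then obtain K where K: "K \<in> ?F" and max: "\<forall>G\<in>?F. K \<subseteq> G \<longrightarrow> G = K" by blast
  show thesis
  proof (rule that)
    show "is_filter H S K" "G0 \<subseteq> K" "K \<inter> E = {}" using K by simp_all
    show "G = K" if "is_filter H S G" "K \<subseteq> G" "G \<inter> E = {}" for G
      using max that K by blast
  qed
qed

lemma maximal_filter_disjoint_dual:
  assumes E: "E \<subseteq> S" "up_directed E" and K: "is_filter H S K" "K \<inter> E = {}"
    and max: "\<And>G. is_filter H S G \<Longrightarrow> K \<subseteq> G \<Longrightarrow> G \<inter> E = {} \<Longrightarrow> G = K"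
  shows "K \<in> X"
  unfolding dual_poset_def meet_irreducible_filter_def mem_Collect_eq
proof (intro conjI notI)
  show False if "K = S" using that E K unfolding up_directed_def by blast
next
  assume "\<exists>G1 G2. is_filter H S G1 \<and> is_filter H S G2 \<and> G1 \<noteq> K \<and> G2 \<noteq> K \<and> K = G1 \<inter> G2"
  then obtain G1 G2 where G: "is_filter H S G1" "is_filter H S G2" "G1 \<noteq> K" "G2 \<noteq> K"
    and K12: "K = G1 \<inter> G2" by blast
  then obtain e1 e2 where "e1 \<in> G1 \<inter> E" "e2 \<in> G2 \<inter> E" using max by blast
  then obtain e where "e \<in> E" "e1 \<preceq> e" "e2 \<preceq> e" "e1 \<in> G1" "e2 \<in> G2"
    using E(2) unfolding up_directed_def by blast
  then have "e \<in> G1 \<inter> G2" using E(1) G filter_up by blast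
  then show False using K12 K(2) \<open>e \<in> E\<close> by blast
qed (fact K(1))

lemma filter_extension:
  assumes "is_filter H S G0" "E \<subseteq> S" "up_directed E" "G0 \<inter> E = {}"
  obtains K where "K \<in> X" "G0 \<subseteq> K" "K \<inter> E = {}"
    "\<And>G. is_filter H S G \<Longrightarrow> K \<subseteq> G \<Longrightarrow> G \<inter> E = {} \<Longrightarrow> G = K"
proof (rule maximal_filter_disjoint[OF assms(1,4)])
  fix K assume K: "is_filter H S K" "G0 \<subseteq> K" "K \<inter> E = {}"
    and max: "\<And>G. is_filter H S G \<Longrightarrow> K \<subseteq> G \<Longrightarrow> G \<inter> E = {} \<Longrightarrow> G = K"
  show thesis using that[OF maximal_filter_disjoint_dual[OF assms(2,3) K(1,3) max] K(2,3) max] .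
qed

lemma dual_separation:
  assumes "a \<in> S" "b \<in> S" "\<not> a \<preceq> b"
  shows "\<exists>K\<in>X. a \<in> K \<and> b \<notin> K"
proof -
  have "{s \<in> S. a \<preceq> s} \<inter> {b} = {}" "{b} \<subseteq> S" using assms by blast+
  moreover have "up_directed {b}" using assms singleton_directed[of b] by simp
  ultimately obtain K where "K \<in> X" "{s \<in> S. a \<preceq> s} \<subseteq> K" "K \<inter> {b} = {}"
    by (metis filter_extension[OF principal_filter[OF assms(1)]])
  moreover have "a \<in> {s \<in> S. a \<preceq> s}" using assms hle_refl by simp
  ultimately show ?thesis by blast
qed

lemma filter_common_factor:
  assumes K: "is_filter H S K" and k: "k1 \<in> K" "k2 \<in> K" and S: "a \<in> S" "b \<in> S" "c \<in> S"
    and le: "k1 \<sqinter> a \<preceq> c" "k2 \<sqinter> b \<preceq> c"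
  shows "\<exists>f\<in>K. f \<sqinter> a \<preceq> c \<and> f \<sqinter> b \<preceq> c"
proof -
  have "k1 \<in> S" "k2 \<in> S" using k filter_subset[OF K] by blast+
  then have "k1 \<sqinter> k2 \<sqinter> a \<preceq> c" "k1 \<sqinter> k2 \<sqinter> b \<preceq> c"
    using meet_le_antimono[of k1 "k1 \<sqinter> k2" a c] meet_le_antimono[of k2 "k1 \<sqinter> k2" b c]
      meet_le1 meet_le2 meet_closed le S by simp_all
  then show ?thesis using filter_meet[OF K k] by blast
qed

lemma dual_pair_bound:
  assumes K: "K \<in> X" and ab: "a \<in> S - K" "b \<in> S - K"
  shows "\<exists>f\<in>K. \<exists>c\<in>S - K. f \<sqinter> a \<preceq> c \<and> f \<sqinter> b \<preceq> c"
proof -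
  have fK: "is_filter H S K" using dual_filter[OF K] .
  note ga = gen_filter_singleton[OF fK, of a] and gb = gen_filter_singleton[OF fK, of b]
  obtain c where c: "c \<in> gen_filter K {a}" "c \<in> gen_filter K {b}" "c \<notin> K"
    using dual_irreducible[OF K ga(1) gb(1) ga(2) gb(2)] ga(3) gb(3) ab by blast
  obtain k1 k2 where "k1 \<in> K" "k2 \<in> K" "k1 \<sqinter> a \<preceq> c" "k2 \<sqinter> b \<preceq> c" "c \<in> S"
    using c unfolding gen_filter_def by blast
  then show ?thesis using filter_common_factor[OF fK] ab c(3) by blast
qed

lemma dual_finite_bound:
  assumes K: "K \<in> X" and B: "finite B" "B \<subseteq> S - K"
  shows "\<exists>f\<in>K. \<exists>c\<in>S - K. \<forall>b\<in>B. f \<sqinter> b \<preceq> c"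
  using B
proof (induction B rule: finite_induct)
  case empty
  then show ?case using dual_proper[OF K] filter_nonempty[OF dual_filter[OF K]] by blast
next
  case (insert b B)
  then obtain f1 c1 where 1: "f1 \<in> K" "c1 \<in> S - K" "\<forall>b'\<in>B. f1 \<sqinter> b' \<preceq> c1" by blast
  obtain f2 c where 2: "f2 \<in> K" "c \<in> S - K" "f2 \<sqinter> b \<preceq> c" "f2 \<sqinter> c1 \<preceq> c"
    using dual_pair_bound[OF K, of b c1] insert.prems 1(2) by blast
  have fK: "is_filter H S K" using dual_filter[OF K] .
  have S: "f1 \<in> S" "f2 \<in> S" "b \<in> S" "c \<in> S" "c1 \<in> S" using 1 2 insert.prems filter_subset[OF fK]
    by blast+
  have f: "f1 \<sqinter> f2 \<preceq> f1" "f1 \<sqinter> f2 \<preceq> f2" using S meet_le1 meet_le2 by simp_all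
  have "f1 \<sqinter> f2 \<sqinter> b' \<preceq> c" if b': "b' \<in> B" for b'
  proof -
    have b'S: "b' \<in> S" using b' insert.prems by blast
    have "f1 \<sqinter> f2 \<sqinter> b' = f2 \<sqinter> (f1 \<sqinter> b')" using S b'S meet_assoc meet_comm by (metis in_A)
    also have "\<dots> \<preceq> f2 \<sqinter> c1" using 1(3) b' S b'S meet_mono hle_refl meet_closed by simp
    finally show ?thesis using 2(4) S b'S hle_trans meet_closed by (meson in_A)
  qed
  moreover have "f1 \<sqinter> f2 \<sqinter> b \<preceq> c"
    using meet_le_antimono[of f2 "f1 \<sqinter> f2" b c] f 2(3) S meet_closed by simp
  ultimately show ?case using filter_meet[OF fK 1(1) 2(1)] 2(2) by blast
qed

lemma dual_prime:
  assumes "SOr \<in> L" "K \<in> X" "a \<in> S" "b \<in> S" "a \<squnion> b \<in> K"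
  shows "a \<in> K \<or> b \<in> K"
proof (rule ccontr)
  assume "\<not> ?thesis"
  then obtain f c where fc: "f \<in> K" "c \<in> S - K" "f \<sqinter> a \<preceq> c" "f \<sqinter> b \<preceq> c"
    using dual_pair_bound[OF assms(2)] assms(3,4) by blast
  have fS: "f \<in> S" using fc(1) filter_subset[OF dual_filter[OF assms(2)]] by blast
  have "f \<sqinter> (a \<squnion> b) \<preceq> c"
    using hle_trans[OF _ _ _ meet_join_le[of f a b]] join_le_iff[of "f \<sqinter> a" "f \<sqinter> b" c]
      fc fS assms(3,4) meet_closed join_closed by simp
  moreover have "f \<sqinter> (a \<squnion> b) \<in> K" using filter_meet[OF dual_filter] assms fc(1) by blast
  ultimately show False using filter_up[OF dual_filter[OF assms(2)]] fc(2) by blast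
qed

lemma dual_join_iff:
  assumes "SOr \<in> L" "K \<in> X" "a \<in> S" "b \<in> S"
  shows "a \<squnion> b \<in> K \<longleftrightarrow> a \<in> K \<or> b \<in> K"
proof
  assume "a \<in> K \<or> b \<in> K"
  moreover have "a \<preceq> a \<squnion> b" "b \<preceq> a \<squnion> b" using assms join_ge1 join_ge2 by simp_all
  ultimately show "a \<squnion> b \<in> K"
    using filter_up[OF dual_filter[OF assms(2)] _ join_in_S[OF assms(1,3,4)]] by blast
qed (rule dual_prime[OF assms])

lemma dual_imp_notin:
  assumes "K \<in> X" "a \<in> S" "b \<in> S" "a \<in> K" "b \<notin> K"
  shows "a \<rightarrow> b \<notin> K"
proof
  assume "a \<rightarrow> b \<in> K"
  then have "a \<sqinter> (a \<rightarrow> b) \<in> K" using filter_meet[OF dual_filter[OF assms(1)] assms(4)] by blast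
  then show False using filter_up[OF dual_filter[OF assms(1)] _ assms(3) modus_ponens[of a b]] assms
    by simp
qed

lemma dual_neg_notin:
  assumes "K \<in> X" "a \<in> S" "a \<in> K"
  shows "neg H a \<notin> K"
proof
  assume "neg H a \<in> K"
  then have "a \<sqinter> neg H a \<in> K" using filter_meet[OF dual_filter[OF assms(1)] assms(3)] by blast
  then show False using meet_neg_eq_bot[of a] bot_notin_dual[OF assms(1)] assms(2) by simp
qed

lemma compl_directed_if_imp_bounds:
  assumes K: "K \<in> X"
    and bound: "\<And>a b. a \<in> S - K \<Longrightarrow> b \<in> S - K \<Longrightarrow>
      \<exists>f\<in>K. \<exists>c\<in>S - K. f \<sqinter> a \<preceq> c \<and> f \<sqinter> b \<preceq> c \<and> f \<rightarrow> c \<in> S"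
  shows "up_directed (S - K)"
  unfolding up_directed_def
proof (intro conjI ballI)
  show "S - K \<noteq> {}" using dual_proper[OF K] by blast
  fix a b assume ab: "a \<in> S - K" "b \<in> S - K"
  then obtain f c where fc: "f \<in> K" "c \<in> S - K" "f \<sqinter> a \<preceq> c" "f \<sqinter> b \<preceq> c" "f \<rightarrow> c \<in> S"
    using bound by blast
  have S: "f \<in> S" "a \<in> S" "b \<in> S" "c \<in> S" using fc ab filter_subset[OF dual_filter[OF K]] by blast+
  have "a \<preceq> f \<rightarrow> c" "b \<preceq> f \<rightarrow> c"
    using fc(3,4) S residuation meet_comm by (metis in_A)+
  moreover have "f \<rightarrow> c \<notin> K" using dual_imp_notin[OF K] fc S by blast
  ultimately show "\<exists>e\<in>S - K. a \<preceq> e \<and> b \<preceq> e" using fc(5) by blast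
qed

lemma dual_compl_directed_if_imp:
  assumes "SImp \<in> L" "K \<in> X" shows "up_directed (S - K)"
proof (rule compl_directed_if_imp_bounds[OF assms(2)])
  fix a b assume "a \<in> S - K" "b \<in> S - K"
  then obtain f c where fc: "f \<in> K" "c \<in> S - K" "f \<sqinter> a \<preceq> c" "f \<sqinter> b \<preceq> c"
    using dual_pair_bound[OF assms(2)] by blast
  moreover have "f \<rightarrow> c \<in> S"
    using imp_in_S[OF assms(1)] fc(1,2) filter_subset[OF dual_filter[OF assms(2)]] by blast
  ultimately show "\<exists>f\<in>K. \<exists>c\<in>S - K. f \<sqinter> a \<preceq> c \<and> f \<sqinter> b \<preceq> c \<and> f \<rightarrow> c \<in> S" by blast
qed

lemma dual_compl_directed_if_neg:
  assumes neg: "SNeg \<in> L" and K: "K \<in> X"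
    and max: "\<And>G. is_filter H S G \<Longrightarrow> K \<subseteq> G \<Longrightarrow> bot H \<notin> G \<Longrightarrow> G = K"
  shows "up_directed (S - K)"
proof (rule compl_directed_if_imp_bounds[OF K])
  have fK: "is_filter H S K" using dual_filter[OF K] .
  have bot: "bot H \<in> S - K" using bot_in_S_if_neg[OF neg] bot_notin_dual[OF K] by blast
  have witness: "\<exists>k\<in>K. k \<sqinter> a \<preceq> bot H" if a: "a \<in> S - K" for a
  proof -
    note g = gen_filter_singleton[OF fK, of a]
    have "bot H \<in> gen_filter K {a}" using max[OF g(1,2)] g(3) a by blast
    then show ?thesis unfolding gen_filter_def by blast
  qed
  fix a b assume ab: "a \<in> S - K" "b \<in> S - K"
  then obtain k1 k2 where "k1 \<in> K" "k2 \<in> K" "k1 \<sqinter> a \<preceq> bot H" "k2 \<sqinter> b \<preceq> bot H"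
    using witness by blast
  then obtain f where f: "f \<in> K" "f \<sqinter> a \<preceq> bot H" "f \<sqinter> b \<preceq> bot H"
    using filter_common_factor[OF fK] ab bot by blast
  moreover have "f \<rightarrow> bot H \<in> S"
    using neg_in_S[OF neg] f(1) filter_subset[OF fK] neg_eq_imp_bot by fastforce
  ultimately show "\<exists>f\<in>K. \<exists>c\<in>S - K. f \<sqinter> a \<preceq> c \<and> f \<sqinter> b \<preceq> c \<and> f \<rightarrow> c \<in> S"
    using bot by blast
qed

lemma compl_directed_avoid:
  assumes "up_directed (S - K)" "finite Cs" "\<And>G. G \<in> Cs \<Longrightarrow> is_filter H S G \<and> \<not> G \<subseteq> K"
  shows "\<exists>c\<in>S - K. \<forall>G\<in>Cs. c \<in> G"
  using assms(2,3)
proof (induction Cs rule: finite_induct)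
  case empty
  then show ?case using assms(1) unfolding up_directed_def by blast
next
  case (insert G Cs)
  then obtain c0 where c0: "c0 \<in> S - K" "\<forall>G'\<in>Cs. c0 \<in> G'" by blast
  have G: "is_filter H S G" "\<not> G \<subseteq> K" using insert.prems by blast+
  then obtain g where g: "g \<in> G" "g \<in> S - K" using filter_subset by blast
  obtain e where e: "e \<in> S - K" "c0 \<preceq> e" "g \<preceq> e"
    using assms(1) c0(1) g(2) unfolding up_directed_def by blast
  have "e \<in> G" using filter_up[OF G(1) g(1)] e by blast
  moreover have "e \<in> G'" if "G' \<in> Cs" for G'
    using filter_up[of G' c0 e] that c0(2) e insert.prems by blast
  ultimately show ?case using e(1) by blast
qed

lemma dual_Inter_above:
  assumes K: "K \<in> X" and Cs: "finite Cs" "Cs \<noteq> {}"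
    and above: "\<And>G. G \<in> Cs \<Longrightarrow> is_filter H S G \<and> K \<subseteq> G \<and> G \<noteq> K"
  shows "is_filter H S (\<Inter>Cs) \<and> K \<subseteq> \<Inter>Cs \<and> \<Inter>Cs \<noteq> K"
  using Cs above
proof (induction Cs rule: finite_ne_induct)
  case (singleton G)
  then show ?case by simp
next
  case (insert G Cs)
  then have IH: "is_filter H S (\<Inter>Cs)" "K \<subseteq> \<Inter>Cs" "\<Inter>Cs \<noteq> K"
    and G: "is_filter H S G" "K \<subseteq> G" "G \<noteq> K" by blast+
  have "K \<noteq> {}" using filter_nonempty[OF dual_filter[OF K]] .
  then have "is_filter H S (G \<inter> \<Inter>Cs)" using filter_Int[OF G(1) IH(1)] IH(2) G(2) by blast
  moreover have "G \<inter> \<Inter>Cs \<noteq> K" using dual_irreducible[OF K G(1) IH(1) G(2) IH(2) G(3) IH(3)] by blast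
  ultimately show ?case using IH(2) G(2) by simp
qed

lemma dual_avoid_above:
  assumes K: "K \<in> X" and "finite Cs"
    and "\<And>G. G \<in> Cs \<Longrightarrow> is_filter H S G \<and> K \<subseteq> G \<and> G \<noteq> K"
  shows "\<exists>c\<in>S - K. \<forall>G\<in>Cs. c \<in> G"
proof (cases "Cs = {}")
  case True
  then show ?thesis using dual_proper[OF K] by blast
next
  case False
  then have "is_filter H S (\<Inter>Cs)" "K \<subseteq> \<Inter>Cs" "\<Inter>Cs \<noteq> K"
    using dual_Inter_above[OF K] assms by blast+
  then show ?thesis using filter_subset by blast
qed

end

section \<open>The representation in the upset algebra of the dual poset\<close>

lemma Up_simps [simp]:
  "carrier (Up Y le) = upsets Y le" "meet (Up Y le) = (\<inter>)" "join (Up Y le) = (\<union>)"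
  "imp (Up Y le) = (\<lambda>U V. Y - downclosure Y le (U - V))"
  "neg (Up Y le) = (\<lambda>U. Y - downclosure Y le U)" "bot (Up Y le) = {}" "top (Up Y le) = Y"
  by (simp_all add: Up_def)

lemma alg_le_Up [simp]: "alg_le (Up Y le) U V \<longleftrightarrow> U \<subseteq> V"
  by (auto simp: alg_le_def)

lemma downclosure_mono: "U \<subseteq> V \<Longrightarrow> downclosure Y le U \<subseteq> downclosure Y le V"
  unfolding downclosure_def by blast

lemma eval_Up_subset: "(\<And>x. v x \<subseteq> Y) \<Longrightarrow> eval (Up Y le) v \<phi> \<subseteq> Y"
  by (induction \<phi>) auto

lemma eval_Up_mono:
  assumes "\<And>x. v x \<subseteq> w x"
  shows "(positive \<phi> \<longrightarrow> eval (Up Y le) v \<phi> \<subseteq> eval (Up Y le) w \<phi>) \<and>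
    (negative \<phi> \<longrightarrow> eval (Up Y le) w \<phi> \<subseteq> eval (Up Y le) v \<phi>)"
proof (induction \<phi>)
  case (FAnd \<phi> \<psi>)
  then show ?case by auto
next
  case (FOr \<phi> \<psi>)
  then show ?case by auto
next
  case (FImp \<phi> \<psi>)
  then show ?case using downclosure_mono[of _ _ Y le] by (simp add: Diff_mono)
next
  case (FNeg \<phi>)
  then show ?case using downclosure_mono[of _ _ Y le] by (simp add: Diff_mono)
qed (simp_all add: assms)

context L_subreduct
begin

definition rep :: "'a \<Rightarrow> 'a set set" where
  "rep a = {K \<in> X. a \<in> K}"

lemma rep_upset: "rep a \<in> upsets X (\<subseteq>)"
  unfolding rep_def upsets_def by blast

lemma rep_le_iff:
  assumes "a \<in> S" "b \<in> S" shows "rep a \<subseteq> rep b \<longleftrightarrow> a \<preceq> b"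
proof
  assume "rep a \<subseteq> rep b"
  then show "a \<preceq> b" using dual_separation[OF assms] unfolding rep_def by blast
next
  assume "a \<preceq> b"
  then show "rep a \<subseteq> rep b" using filter_up[OF dual_filter _ assms(2)] unfolding rep_def by blast
qed

lemma rep_meet: "a \<in> S \<Longrightarrow> b \<in> S \<Longrightarrow> rep (a \<sqinter> b) = rep a \<inter> rep b"
  unfolding rep_def by (auto simp: filter_meet_iff dual_filter)

lemma rep_join: "SOr \<in> L \<Longrightarrow> a \<in> S \<Longrightarrow> b \<in> S \<Longrightarrow> rep (a \<squnion> b) = rep a \<union> rep b"
  unfolding rep_def by (auto simp: dual_join_iff)

lemma rep_imp:
  assumes ab: "a \<in> S" "b \<in> S" "a \<rightarrow> b \<in> S"
  shows "rep (a \<rightarrow> b) = X - downclosure X (\<subseteq>) (rep a - rep b)"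
proof (intro equalityI subsetI)
  fix K assume "K \<in> rep (a \<rightarrow> b)"
  then have K: "K \<in> X" "a \<rightarrow> b \<in> K" unfolding rep_def by blast+
  have "b \<in> K'" if "K' \<in> X" "K \<subseteq> K'" "a \<in> K'" for K'
    using dual_imp_notin[OF that(1) ab(1,2) that(3)] that(2) K(2) by blast
  then show "K \<in> X - downclosure X (\<subseteq>) (rep a - rep b)"
    using K unfolding downclosure_def rep_def by blast
next
  fix K assume K: "K \<in> X - downclosure X (\<subseteq>) (rep a - rep b)"
  have fK: "is_filter H S K" using K dual_filter by blast
  note g = gen_filter_singleton[OF fK ab(1)]
  show "K \<in> rep (a \<rightarrow> b)"
  proof (rule ccontr)
    assume "K \<notin> rep (a \<rightarrow> b)"
    then have "a \<rightarrow> b \<notin> K" using K unfolding rep_def by blast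
    have "b \<notin> gen_filter K {a}"
    proof
      assume "b \<in> gen_filter K {a}"
      then obtain k where "k \<in> K" "k \<sqinter> a \<preceq> b" unfolding gen_filter_def by blast
      moreover have "k \<in> S" using \<open>k \<in> K\<close> filter_subset[OF fK] by blast
      ultimately have "k \<preceq> a \<rightarrow> b" using residuation[of a b k] ab by simp
      then have "a \<rightarrow> b \<in> K" using filter_up[OF fK \<open>k \<in> K\<close> ab(3)] by blast
      then show False using \<open>a \<rightarrow> b \<notin> K\<close> by blast
    qed
    moreover have "{b} \<subseteq> S" "up_directed {b}" using ab singleton_directed[of b] by simp_all
    ultimately obtain K' where "K' \<in> X" "gen_filter K {a} \<subseteq> K'" "K' \<inter> {b} = {}"
      by (metis filter_extension[OF g(1)] disjoint_insert(1) inf_bot_right)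
    then have "K \<in> downclosure X (\<subseteq>) (rep a - rep b)"
      using K g(2,3) unfolding downclosure_def rep_def by blast
    then show False using K by blast
  qed
qed

lemma rep_bot: "rep (bot H) = {}"
  unfolding rep_def using bot_notin_dual by blast

lemma rep_top: "top H \<in> S \<Longrightarrow> rep (top H) = X"
  unfolding rep_def using top_in_dual by blast

lemma rep_neg: "SNeg \<in> L \<Longrightarrow> a \<in> S \<Longrightarrow> rep (neg H a) = X - downclosure X (\<subseteq>) (rep a)"
  using rep_imp[of a "bot H"] rep_bot neg_eq_imp_bot neg_in_S bot_in_S_if_neg by simp

lemma eval_rep:
  assumes "\<And>x. v x \<in> S"
  shows "syms \<phi> \<subseteq> L \<Longrightarrow> eval (Up X (\<subseteq>)) (rep \<circ> v) \<phi> = rep (eval H v \<phi>)"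
proof (induction \<phi>)
  case (FAnd \<phi> \<psi>)
  then show ?case using rep_meet eval_in_S assms by simp
next
  case (FOr \<phi> \<psi>)
  then show ?case using rep_join eval_in_S assms by simp
next
  case (FImp \<phi> \<psi>)
  then show ?case using rep_imp eval_in_S imp_in_S assms by simp
next
  case (FNeg \<phi>)
  then show ?case using rep_neg eval_in_S assms by simp
qed (simp_all add: rep_bot rep_top top_in_S)

lemma qeq_valid_if_dual_valid:
  assumes lang: "qeq_in_language L (QEq \<phi>s y z)"
    and valid: "qeq_valid (Up X (\<subseteq>)) (upsets X (\<subseteq>)) (QEq \<phi>s y z)"
  shows "qeq_valid H S (QEq \<phi>s y z)"
  unfolding qeq_valid.simps
proof (intro allI impI)
  fix v assume v: "\<forall>x. v x \<in> S" and prem: "\<forall>\<phi>\<in>set \<phi>s. eval H v \<phi> \<sqinter> v y \<preceq> v z"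
  have "rep (eval H v \<phi>) \<inter> rep (v y) \<subseteq> rep (v z)" if "\<phi> \<in> set \<phi>s" for \<phi>
    using that prem rep_le_iff[of "eval H v \<phi> \<sqinter> v y" "v z"] rep_meet lang v eval_in_S meet_in_S
    by simp
  then have "\<forall>\<phi>\<in>set \<phi>s. eval (Up X (\<subseteq>)) (rep \<circ> v) \<phi> \<inter> rep (v y) \<subseteq> rep (v z)"
    using eval_rep[of v] lang v by simp
  then have "rep (v y) \<subseteq> rep (v z)"
    using valid[unfolded qeq_valid.simps, rule_format, of "rep \<circ> v"] rep_upset by simp
  then show "v y \<preceq> v z" using rep_le_iff v by blast
qed

end

section \<open>Canonicity\<close>

locale canonicity = L_subreduct H L S for H :: "'a alg" and L S +
  fixes V :: "nat \<Rightarrow> 'a set set" and F :: "'a set"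
  assumes V_upset: "V x \<in> upsets X (\<subseteq>)" and F_dual: "F \<in> X"
begin

text \<open>A support \<open>Gs\<close> (finitely many points
  above \<open>F\<close>) determines the valuation \<open>minval Gs \<le> V\<close> whose value at \<open>x\<close> is the upset
  generated by \<open>Gs \<inter> V x\<close>; the valuations \<open>w\<close> into \<open>S\<close> that cover \<open>Gs\<close> are those with
  \<open>minval Gs x \<subseteq> rep (w x)\<close>. They form a down-directed family, and \<open>cover_filter Gs\<close> and
  \<open>support_filter\<close> express "for all sufficiently small covering \<open>w\<close>" and "for all
  sufficiently large supports".\<close>

abbreviation UX :: "'a set set alg" where "UX \<equiv> Up X (\<subseteq>)"

definition support :: "'a set set \<Rightarrow> bool" where
  "support Gs \<longleftrightarrow> finite Gs \<and> Gs \<subseteq> X \<and> (\<forall>G\<in>Gs. F \<subseteq> G)"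

definition minval :: "'a set set \<Rightarrow> nat \<Rightarrow> 'a set set" where
  "minval Gs x = {K \<in> X. \<exists>G \<in> Gs \<inter> V x. G \<subseteq> K}"

definition covers :: "'a set set \<Rightarrow> (nat \<Rightarrow> 'a) \<Rightarrow> bool" where
  "covers Gs w \<longleftrightarrow> (\<forall>x. w x \<in> S \<and> (\<forall>G \<in> Gs \<inter> V x. w x \<in> G))"

definition separable :: "'a set set \<Rightarrow> 'a set \<Rightarrow> bool" where
  "separable Gs K \<longleftrightarrow>
     (\<forall>x. (\<forall>G \<in> Gs \<inter> V x. \<not> G \<subseteq> K) \<longrightarrow> (\<exists>c\<in>S - K. \<forall>G \<in> Gs \<inter> V x. c \<in> G))"

definition cover_filter :: "'a set set \<Rightarrow> (nat \<Rightarrow> 'a) filter" where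
  "cover_filter Gs =
     (INF w0 \<in> {w. covers Gs w}. principal {w. covers Gs w \<and> (\<forall>x. w x \<preceq> w0 x)})"

definition support_filter :: "'a set set filter" where
  "support_filter = (INF Gs0 \<in> {Gs. support Gs}. principal {Gs. support Gs \<and> Gs0 \<subseteq> Gs})"

lemma V_dual: "V x \<subseteq> X"
  using V_upset unfolding upsets_def by blast

lemma minval_le_V: "minval Gs x \<subseteq> V x"
  using V_upset unfolding minval_def upsets_def by blast

lemma eval_minval_dual: "eval UX (minval Gs) \<phi> \<subseteq> X"
  by (rule eval_Up_subset) (simp add: minval_def)

lemma eval_V_dual: "eval UX V \<phi> \<subseteq> X"
  using eval_Up_subset V_dual by blast

lemma covers_in_S: "covers Gs w \<Longrightarrow> w x \<in> S"
  unfolding covers_def by blast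

lemma covers_exists:
  assumes "support Gs" shows "\<exists>w. covers Gs w"
proof -
  obtain f where f: "f \<in> F" using filter_nonempty[OF dual_filter[OF F_dual]] by blast
  then have "f \<in> S" using filter_subset[OF dual_filter[OF F_dual]] by blast
  then have "covers Gs (\<lambda>_. f)" using assms f unfolding covers_def support_def by blast
  then show ?thesis by blast
qed

lemma covers_update:
  "covers Gs w \<Longrightarrow> c \<in> S \<Longrightarrow> \<forall>G \<in> Gs \<inter> V x. c \<in> G \<Longrightarrow> covers Gs (w(x := c))"
  unfolding covers_def by simp

lemma covers_meet:
  assumes "support Gs" "covers Gs w1" "covers Gs w2"
  shows "covers Gs (\<lambda>x. w1 x \<sqinter> w2 x)"
  unfolding covers_def
proof (intro allI conjI ballI)
  show "w1 x \<sqinter> w2 x \<in> S" for x using assms(2,3) covers_in_S meet_in_S by blast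
next
  fix x G assume G: "G \<in> Gs \<inter> V x"
  then have "G \<in> X" using assms(1) unfolding support_def by blast
  moreover have "w1 x \<in> G" "w2 x \<in> G" using G assms(2,3) unfolding covers_def by blast+
  ultimately show "w1 x \<sqinter> w2 x \<in> G" using filter_meet[OF dual_filter] by blast
qed

lemma covers_meet_le:
  assumes "covers Gs w1" "covers Gs w2"
  shows "w1 x \<sqinter> w2 x \<preceq> w1 x" "w1 x \<sqinter> w2 x \<preceq> w2 x"
  using assms covers_in_S meet_le1 meet_le2 by simp_all

lemma covers_eval_mono:
  assumes "covers Gs v" "covers Gs w" "\<forall>x. v x \<preceq> w x"
  shows "(positive \<rho> \<longrightarrow> eval H v \<rho> \<preceq> eval H w \<rho>) \<and> (negative \<rho> \<longrightarrow> eval H w \<rho> \<preceq> eval H v \<rho>)"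
  using eval_mono[of v w \<rho>] assms covers_in_S[of Gs] by simp

lemma covers_eval_in_S: "covers Gs w \<Longrightarrow> syms \<rho> \<subseteq> L \<Longrightarrow> eval H w \<rho> \<in> S"
  using eval_in_S covers_in_S by blast

lemma eventually_cover_filter:
  assumes "support Gs"
  shows "eventually P (cover_filter Gs) \<longleftrightarrow>
    (\<exists>w0. covers Gs w0 \<and> (\<forall>w. covers Gs w \<and> (\<forall>x. w x \<preceq> w0 x) \<longrightarrow> P w))"
  unfolding cover_filter_def
proof (subst eventually_INF_base)
  show "{w. covers Gs w} \<noteq> {}" using covers_exists[OF assms] by blast
next
  fix w1 w2 assume w: "w1 \<in> {w. covers Gs w}" "w2 \<in> {w. covers Gs w}"
  let ?w = "\<lambda>x. w1 x \<sqinter> w2 x"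
  have below: "w x \<preceq> w1 x \<and> w x \<preceq> w2 x" if "covers Gs w" "w x \<preceq> ?w x" for w x
  proof -
    have "w x \<in> S" "w1 x \<in> S" "w2 x \<in> S" using that(1) w covers_in_S by blast+
    then show ?thesis using that(2) le_meet_iff[of "w1 x" "w2 x" "w x"] by simp
  qed
  have "covers Gs ?w" using covers_meet[OF assms] w by simp
  moreover have "{w. covers Gs w \<and> (\<forall>x. w x \<preceq> ?w x)}
      \<subseteq> {w. covers Gs w \<and> (\<forall>x. w x \<preceq> w1 x)} \<inter> {w. covers Gs w \<and> (\<forall>x. w x \<preceq> w2 x)}"
    using below by auto
  ultimately show "\<exists>w\<in>{w. covers Gs w}.
      principal {w'. covers Gs w' \<and> (\<forall>x. w' x \<preceq> w x)}
        \<le> inf (principal {w. covers Gs w \<and> (\<forall>x. w x \<preceq> w1 x)})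
          (principal {w. covers Gs w \<and> (\<forall>x. w x \<preceq> w2 x)})"
    unfolding inf_principal principal_le_iff by (intro bexI[of _ ?w]) simp_all
qed (simp add: eventually_principal)

lemma cover_filter_witness:
  assumes "support Gs" "eventually P (cover_filter Gs)"
  shows "\<exists>w. covers Gs w \<and> P w"
proof -
  obtain w0 where "covers Gs w0" "\<forall>w. covers Gs w \<and> (\<forall>x. w x \<preceq> w0 x) \<longrightarrow> P w"
    using assms unfolding eventually_cover_filter[OF assms(1)] by blast
  moreover have "\<forall>x. w0 x \<preceq> w0 x" using calculation(1) covers_in_S hle_refl by simp
  ultimately show ?thesis by blast
qed

lemma eventually_covers: "support Gs \<Longrightarrow> \<forall>\<^sub>F w in cover_filter Gs. covers Gs w"
  using covers_exists by (auto simp: eventually_cover_filter)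

lemma eventually_positive_notin:
  assumes "support Gs" "K \<in> X" "positive \<rho>" "syms \<rho> \<subseteq> L" "covers Gs w0" "eval H w0 \<rho> \<notin> K"
  shows "\<forall>\<^sub>F w in cover_filter Gs. eval H w \<rho> \<notin> K"
  unfolding eventually_cover_filter[OF assms(1)]
proof (intro exI conjI allI impI)
  fix w assume "covers Gs w \<and> (\<forall>x. w x \<preceq> w0 x)"
  then have "eval H w \<rho> \<preceq> eval H w0 \<rho>" using covers_eval_mono[of Gs w w0 \<rho>] assms(3,5) by blast
  then show "eval H w \<rho> \<notin> K"
    using filter_up[OF dual_filter[OF assms(2)] _ covers_eval_in_S[OF assms(5,4)]] assms(6) by blast
qed (fact assms(5))

lemma eventually_negative_in:
  assumes "support Gs" "K \<in> X" "negative \<rho>" "syms \<rho> \<subseteq> L" "covers Gs w0" "eval H w0 \<rho> \<in> K"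
  shows "\<forall>\<^sub>F w in cover_filter Gs. eval H w \<rho> \<in> K"
  unfolding eventually_cover_filter[OF assms(1)]
proof (intro exI conjI allI impI)
  fix w assume w: "covers Gs w \<and> (\<forall>x. w x \<preceq> w0 x)"
  then have "eval H w0 \<rho> \<preceq> eval H w \<rho>" using covers_eval_mono[of Gs w w0 \<rho>] assms(3,5) by blast
  then show "eval H w \<rho> \<in> K"
    using filter_up[OF dual_filter[OF assms(2)] assms(6)] covers_eval_in_S[OF _ assms(4)] w by blast
qed (fact assms(5))

lemma eventually_support_filter:
  "eventually P support_filter \<longleftrightarrow> (\<exists>Gs0. support Gs0 \<and> (\<forall>Gs. support Gs \<and> Gs0 \<subseteq> Gs \<longrightarrow> P Gs))"
  unfolding support_filter_def
proof (subst eventually_INF_base)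
  show "{Gs. support Gs} \<noteq> {}" unfolding support_def by blast
next
  fix Gs1 Gs2 assume "Gs1 \<in> {Gs. support Gs}" "Gs2 \<in> {Gs. support Gs}"
  then have "support (Gs1 \<union> Gs2)" unfolding support_def by blast
  then show "\<exists>Gs\<in>{Gs. support Gs}. principal {Gs'. support Gs' \<and> Gs \<subseteq> Gs'}
      \<le> inf (principal {Gs'. support Gs' \<and> Gs1 \<subseteq> Gs'}) (principal {Gs'. support Gs' \<and> Gs2 \<subseteq> Gs'})"
    unfolding inf_principal principal_le_iff by (intro bexI[of _ "Gs1 \<union> Gs2"]) auto
qed (simp add: eventually_principal)

lemma support_filter_witness: "eventually P support_filter \<Longrightarrow> \<exists>Gs. support Gs \<and> P Gs"
  unfolding eventually_support_filter by blast

lemma eventually_support: "\<forall>\<^sub>F Gs in support_filter. support Gs"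
  unfolding eventually_support_filter support_def by blast

lemma eventually_mem_support:
  assumes "G \<in> X" "F \<subseteq> G" shows "\<forall>\<^sub>F Gs in support_filter. G \<in> Gs"
  unfolding eventually_support_filter
  by (rule exI[of _ "{G}"]) (simp add: assms support_def)

lemma separable_if_compl_directed:
  assumes Gs: "support Gs" and K: "up_directed (S - K)" shows "separable Gs K"
  unfolding separable_def
proof (intro allI impI)
  fix x assume avoid: "\<forall>G \<in> Gs \<inter> V x. \<not> G \<subseteq> K"
  have fin: "finite (Gs \<inter> V x)" using Gs unfolding support_def by blast
  have "is_filter H S G \<and> \<not> G \<subseteq> K" if "G \<in> Gs \<inter> V x" for G
    using that avoid Gs dual_filter unfolding support_def by blast
  then show "\<exists>c\<in>S - K. \<forall>G \<in> Gs \<inter> V x. c \<in> G" by (rule compl_directed_avoid[OF K fin])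
qed

lemma separable_F:
  assumes Gs: "support Gs" shows "separable Gs F"
  unfolding separable_def
proof (intro allI impI)
  fix x assume avoid: "\<forall>G \<in> Gs \<inter> V x. \<not> G \<subseteq> F"
  have fin: "finite (Gs \<inter> V x)" using Gs unfolding support_def by blast
  have "is_filter H S G \<and> F \<subseteq> G \<and> G \<noteq> F" if "G \<in> Gs \<inter> V x" for G
    using that avoid Gs dual_filter unfolding support_def by blast
  then show "\<exists>c\<in>S - F. \<forall>G \<in> Gs \<inter> V x. c \<in> G" by (rule dual_avoid_above[OF F_dual fin])
qed

lemma eventually_covers_mono:
  assumes "support Gs" "\<forall>\<^sub>F w in cover_filter Gs. P w" "\<And>w. covers Gs w \<Longrightarrow> P w \<Longrightarrow> Q w"
  shows "\<forall>\<^sub>F w in cover_filter Gs. Q w"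
  using eventually_conj[OF eventually_covers[OF assms(1)] assms(2)]
  by (rule eventually_mono) (use assms(3) in blast)

text \<open>At separable points, \<open>eval UX (minval Gs) \<rho>\<close> is the intersection of the sets
  \<open>rep (eval H w \<rho>)\<close> over the covering valuations \<open>w\<close> when \<open>\<rho>\<close> is positive, and their union
  when \<open>\<rho>\<close> is negative.\<close>

definition pos_approx :: "'a set set \<Rightarrow> form \<Rightarrow> bool" where
  "pos_approx Gs \<rho> \<longleftrightarrow> (\<forall>K\<in>X. separable Gs K \<longrightarrow> K \<notin> eval UX (minval Gs) \<rho> \<longrightarrow>
     (\<forall>\<^sub>F w in cover_filter Gs. eval H w \<rho> \<notin> K))"

definition neg_approx :: "'a set set \<Rightarrow> form \<Rightarrow> bool" where
  "neg_approx Gs \<rho> \<longleftrightarrow> (\<forall>K\<in>X. K \<in> eval UX (minval Gs) \<rho> \<longrightarrow>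
     (\<forall>\<^sub>F w in cover_filter Gs. eval H w \<rho> \<in> K))"

lemma pos_approx_var: "support Gs \<Longrightarrow> pos_approx Gs (FVar x)"
  unfolding pos_approx_def
proof (intro ballI impI)
  fix K assume Gs: "support Gs" and K: "K \<in> X" "separable Gs K" "K \<notin> eval UX (minval Gs) (FVar x)"
  then have "\<forall>G \<in> Gs \<inter> V x. \<not> G \<subseteq> K" unfolding minval_def by auto
  then obtain c where c: "c \<in> S - K" "\<forall>G \<in> Gs \<inter> V x. c \<in> G"
    using K(2) unfolding separable_def by blast
  obtain w where "covers Gs w" using covers_exists[OF Gs] by blast
  then have "covers Gs (w(x := c))" using covers_update c by blast
  then show "\<forall>\<^sub>F w in cover_filter Gs. eval H w (FVar x) \<notin> K"
    using eventually_positive_notin[OF Gs K(1), of "FVar x" "w(x := c)"] c by simp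
qed

lemma pos_approx_and:
  assumes "support Gs" "syms \<phi> \<subseteq> L" "syms \<psi> \<subseteq> L" "pos_approx Gs \<phi>" "pos_approx Gs \<psi>"
  shows "pos_approx Gs (FAnd \<phi> \<psi>)"
  unfolding pos_approx_def
proof (intro ballI impI)
  fix K assume K: "K \<in> X" "separable Gs K" "K \<notin> eval UX (minval Gs) (FAnd \<phi> \<psi>)"
  then have "(\<forall>\<^sub>F w in cover_filter Gs. eval H w \<phi> \<notin> K)
      \<or> (\<forall>\<^sub>F w in cover_filter Gs. eval H w \<psi> \<notin> K)"
    using assms(4,5) unfolding pos_approx_def by auto
  then show "\<forall>\<^sub>F w in cover_filter Gs. eval H w (FAnd \<phi> \<psi>) \<notin> K"
    by (elim disjE eventually_covers_mono[OF assms(1)])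
      (simp_all add: filter_meet_iff[OF dual_filter[OF K(1)]] covers_eval_in_S assms(2,3))
qed

lemma neg_approx_and:
  assumes "support Gs" "syms \<phi> \<subseteq> L" "syms \<psi> \<subseteq> L" "neg_approx Gs \<phi>" "neg_approx Gs \<psi>"
  shows "neg_approx Gs (FAnd \<phi> \<psi>)"
  unfolding neg_approx_def
proof (intro ballI impI)
  fix K assume K: "K \<in> X" "K \<in> eval UX (minval Gs) (FAnd \<phi> \<psi>)"
  then have "\<forall>\<^sub>F w in cover_filter Gs. eval H w \<phi> \<in> K \<and> eval H w \<psi> \<in> K"
    using assms(4,5) unfolding neg_approx_def by (auto intro: eventually_conj)
  then show "\<forall>\<^sub>F w in cover_filter Gs. eval H w (FAnd \<phi> \<psi>) \<in> K"
    by (rule eventually_mono) (simp add: filter_meet[OF dual_filter[OF K(1)]])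
qed

lemma pos_approx_or:
  assumes "support Gs" "SOr \<in> L" "syms \<phi> \<subseteq> L" "syms \<psi> \<subseteq> L" "pos_approx Gs \<phi>" "pos_approx Gs \<psi>"
  shows "pos_approx Gs (FOr \<phi> \<psi>)"
  unfolding pos_approx_def
proof (intro ballI impI)
  fix K assume K: "K \<in> X" "separable Gs K" "K \<notin> eval UX (minval Gs) (FOr \<phi> \<psi>)"
  then have "\<forall>\<^sub>F w in cover_filter Gs. eval H w \<phi> \<notin> K \<and> eval H w \<psi> \<notin> K"
    using assms(5,6) unfolding pos_approx_def by (simp add: eventually_conj)
  then show "\<forall>\<^sub>F w in cover_filter Gs. eval H w (FOr \<phi> \<psi>) \<notin> K"
    by (rule eventually_covers_mono[OF assms(1)])
      (simp add: dual_join_iff[OF assms(2) K(1)] covers_eval_in_S assms(3,4))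
qed

lemma neg_approx_or:
  assumes "support Gs" "SOr \<in> L" "syms \<phi> \<subseteq> L" "syms \<psi> \<subseteq> L" "neg_approx Gs \<phi>" "neg_approx Gs \<psi>"
  shows "neg_approx Gs (FOr \<phi> \<psi>)"
  unfolding neg_approx_def
proof (intro ballI impI)
  fix K assume K: "K \<in> X" "K \<in> eval UX (minval Gs) (FOr \<phi> \<psi>)"
  then have "(\<forall>\<^sub>F w in cover_filter Gs. eval H w \<phi> \<in> K)
      \<or> (\<forall>\<^sub>F w in cover_filter Gs. eval H w \<psi> \<in> K)"
    using assms(5,6) unfolding neg_approx_def by auto
  then show "\<forall>\<^sub>F w in cover_filter Gs. eval H w (FOr \<phi> \<psi>) \<in> K"
    by (elim disjE eventually_covers_mono[OF assms(1)])
      (simp_all add: dual_join_iff[OF assms(2) K(1)] covers_eval_in_S assms(3,4))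
qed

lemma pos_approx_imp:
  assumes Gs: "support Gs" and imp: "SImp \<in> L" and L: "syms \<phi> \<subseteq> L" "syms \<psi> \<subseteq> L"
    and IH: "neg_approx Gs \<phi>" "pos_approx Gs \<psi>"
  shows "pos_approx Gs (FImp \<phi> \<psi>)"
  unfolding pos_approx_def
proof (intro ballI impI)
  fix K assume K: "K \<in> X" "separable Gs K" "K \<notin> eval UX (minval Gs) (FImp \<phi> \<psi>)"
  then obtain K' where K': "K' \<in> eval UX (minval Gs) \<phi>" "K' \<notin> eval UX (minval Gs) \<psi>" "K \<subseteq> K'"
    by (auto simp: downclosure_def)
  have K'X: "K' \<in> X" using K'(1) eval_minval_dual by blast
  have "separable Gs K'"
    using separable_if_compl_directed[OF Gs dual_compl_directed_if_imp[OF imp K'X]] .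
  then have "\<forall>\<^sub>F w in cover_filter Gs. eval H w \<phi> \<in> K' \<and> eval H w \<psi> \<notin> K'"
    using IH K' K'X unfolding neg_approx_def pos_approx_def by (simp add: eventually_conj)
  then show "\<forall>\<^sub>F w in cover_filter Gs. eval H w (FImp \<phi> \<psi>) \<notin> K"
    by (rule eventually_covers_mono[OF Gs])
      (use dual_imp_notin[OF K'X] covers_eval_in_S L K'(3) in auto)
qed

lemma pos_approx_neg:
  assumes Gs: "support Gs" and neg: "SNeg \<in> L" and L: "syms \<phi> \<subseteq> L" and IH: "neg_approx Gs \<phi>"
  shows "pos_approx Gs (FNeg \<phi>)"
  unfolding pos_approx_def
proof (intro ballI impI)
  fix K assume K: "K \<in> X" "separable Gs K" "K \<notin> eval UX (minval Gs) (FNeg \<phi>)"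
  then obtain K' where K': "K' \<in> eval UX (minval Gs) \<phi>" "K \<subseteq> K'"
    by (auto simp: downclosure_def)
  have K'X: "K' \<in> X" using K'(1) eval_minval_dual by blast
  have "\<forall>\<^sub>F w in cover_filter Gs. eval H w \<phi> \<in> K'"
    using IH K' K'X unfolding neg_approx_def by simp
  then show "\<forall>\<^sub>F w in cover_filter Gs. eval H w (FNeg \<phi>) \<notin> K"
    by (rule eventually_covers_mono[OF Gs])
      (use dual_neg_notin[OF K'X] covers_eval_in_S L K'(2) in auto)
qed

definition cover_values :: "'a set set \<Rightarrow> form \<Rightarrow> 'a set" where
  "cover_values Gs \<rho> = (\<lambda>w. eval H w \<rho>) ` {w. covers Gs w}"

lemma cover_values_in_S: "syms \<rho> \<subseteq> L \<Longrightarrow> cover_values Gs \<rho> \<subseteq> S"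
  unfolding cover_values_def using covers_eval_in_S by blast

lemma cover_values_down_directed:
  assumes Gs: "support Gs" and "positive \<phi>"
  shows "down_directed (cover_values Gs \<phi>)"
  unfolding down_directed_def cover_values_def
proof (intro conjI ballI)
  show "(\<lambda>w. eval H w \<phi>) ` {w. covers Gs w} \<noteq> {}" using covers_exists[OF Gs] by blast
  fix d1 d2
  assume "d1 \<in> (\<lambda>w. eval H w \<phi>) ` {w. covers Gs w}" "d2 \<in> (\<lambda>w. eval H w \<phi>) ` {w. covers Gs w}"
  then obtain w1 w2 where w: "covers Gs w1" "covers Gs w2" "d1 = eval H w1 \<phi>" "d2 = eval H w2 \<phi>"
    by blast
  let ?w = "\<lambda>x. w1 x \<sqinter> w2 x"
  have "covers Gs ?w" using covers_meet[OF Gs w(1,2)] .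
  moreover have "eval H ?w \<phi> \<preceq> d1" "eval H ?w \<phi> \<preceq> d2"
    using covers_eval_mono[OF calculation w(1)] covers_eval_mono[OF calculation w(2)]
      covers_meet_le[OF w(1,2)] assms(2) w(3,4) by blast+
  ultimately show "\<exists>d\<in>(\<lambda>w. eval H w \<phi>) ` {w. covers Gs w}. d \<preceq> d1 \<and> d \<preceq> d2" by blast
qed

lemma cover_values_up_directed:
  assumes Gs: "support Gs" and "negative \<psi>"
  shows "up_directed (cover_values Gs \<psi>)"
  unfolding up_directed_def cover_values_def
proof (intro conjI ballI)
  show "(\<lambda>w. eval H w \<psi>) ` {w. covers Gs w} \<noteq> {}" using covers_exists[OF Gs] by blast
  fix e1 e2
  assume "e1 \<in> (\<lambda>w. eval H w \<psi>) ` {w. covers Gs w}" "e2 \<in> (\<lambda>w. eval H w \<psi>) ` {w. covers Gs w}"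
  then obtain w1 w2 where w: "covers Gs w1" "covers Gs w2" "e1 = eval H w1 \<psi>" "e2 = eval H w2 \<psi>"
    by blast
  let ?w = "\<lambda>x. w1 x \<sqinter> w2 x"
  have "covers Gs ?w" using covers_meet[OF Gs w(1,2)] .
  moreover have "e1 \<preceq> eval H ?w \<psi>" "e2 \<preceq> eval H ?w \<psi>"
    using covers_eval_mono[OF calculation w(1)] covers_eval_mono[OF calculation w(2)]
      covers_meet_le[OF w(1,2)] assms(2) w(3,4) by blast+
  ultimately show "\<exists>e\<in>(\<lambda>w. eval H w \<psi>) ` {w. covers Gs w}. e1 \<preceq> e \<and> e2 \<preceq> e" by blast
qed

text \<open>Compactness: if no covering \<open>w\<close> puts \<open>eval H w (FImp \<phi> \<psi>)\<close> into \<open>K\<close>, the filter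
  generated by \<open>K\<close> and the values of \<open>\<phi>\<close> avoids the up-directed set of values of \<open>\<psi>\<close>, so it
  extends to a point \<open>K' \<supseteq> K\<close> where the induction hypotheses contradict each other.\<close>

lemma gen_filter_avoids_cover_values:
  assumes Gs: "support Gs" and imp: "SImp \<in> L" and L: "syms \<phi> \<subseteq> L" "syms \<psi> \<subseteq> L"
    and sign: "positive \<phi>" "negative \<psi>" and K: "K \<in> X"
    and none: "\<And>w. covers Gs w \<Longrightarrow> eval H w (FImp \<phi> \<psi>) \<notin> K"
  shows "gen_filter K (cover_values Gs \<phi>) \<inter> cover_values Gs \<psi> = {}"
proof (rule ccontr)
  assume "gen_filter K (cover_values Gs \<phi>) \<inter> cover_values Gs \<psi> \<noteq> {}"
  then obtain k w1 w2 where k: "k \<in> K" "k \<sqinter> eval H w1 \<phi> \<preceq> eval H w2 \<psi>"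
    and w: "covers Gs w1" "covers Gs w2"
    unfolding gen_filter_def cover_values_def by blast
  let ?w = "\<lambda>x. w1 x \<sqinter> w2 x"
  have cw: "covers Gs ?w" using covers_meet[OF Gs w] .
  have S: "k \<in> S" "eval H ?w \<phi> \<in> S" "eval H w1 \<phi> \<in> S" "eval H ?w \<psi> \<in> S" "eval H w2 \<psi> \<in> S"
    using k filter_subset[OF dual_filter[OF K]] covers_eval_in_S cw w L by blast+
  have "eval H ?w \<phi> \<preceq> eval H w1 \<phi>" "eval H w2 \<psi> \<preceq> eval H ?w \<psi>"
    using covers_eval_mono[OF cw w(1)] covers_eval_mono[OF cw w(2)] covers_meet_le[OF w] sign
    by blast+
  then have "k \<sqinter> eval H ?w \<phi> \<preceq> eval H ?w \<psi>"
    using k(2) S meet_mono[OF _ _ _ _ hle_refl] hle_trans meet_closed by (meson in_A)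
  then have "eval H ?w (FImp \<phi> \<psi>) \<in> K"
    using filter_up[OF dual_filter[OF K] k(1)] residuation S imp_in_S[OF imp] by simp
  then show False using none cw by blast
qed

lemma neg_approx_imp:
  assumes Gs: "support Gs" and imp: "SImp \<in> L" and L: "syms \<phi> \<subseteq> L" "syms \<psi> \<subseteq> L"
    and sign: "positive \<phi>" "negative \<psi>" and IH: "pos_approx Gs \<phi>" "neg_approx Gs \<psi>"
  shows "neg_approx Gs (FImp \<phi> \<psi>)"
  unfolding neg_approx_def
proof (intro ballI impI)
  fix K assume K: "K \<in> X" "K \<in> eval UX (minval Gs) (FImp \<phi> \<psi>)"
  note gen = gen_filter[OF dual_filter[OF K(1)] cover_values_in_S[OF L(1)]
      cover_values_down_directed[OF Gs sign(1)]]
  show "\<forall>\<^sub>F w in cover_filter Gs. eval H w (FImp \<phi> \<psi>) \<in> K"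
  proof (rule ccontr)
    assume "\<not> ?thesis"
    then have "eval H w (FImp \<phi> \<psi>) \<notin> K" if "covers Gs w" for w
      using eventually_negative_in[OF Gs K(1), of "FImp \<phi> \<psi>"] that sign imp L by auto
    note disj = gen_filter_avoids_cover_values[OF Gs imp L sign K(1) this]
    obtain K' where K': "K' \<in> X" "gen_filter K (cover_values Gs \<phi>) \<subseteq> K'"
      "K' \<inter> cover_values Gs \<psi> = {}"
      by (metis filter_extension[OF gen(1) cover_values_in_S[OF L(2)]
          cover_values_up_directed[OF Gs sign(2)] disj])
    have "K' \<in> eval UX (minval Gs) \<phi>"
    proof (rule ccontr)
      assume "K' \<notin> eval UX (minval Gs) \<phi>"
      moreover have "separable Gs K'"
        using separable_if_compl_directed[OF Gs dual_compl_directed_if_imp[OF imp K'(1)]] .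
      ultimately have "\<forall>\<^sub>F w in cover_filter Gs. eval H w \<phi> \<notin> K'"
        using IH(1) K'(1) unfolding pos_approx_def by blast
      then obtain w where "covers Gs w" "eval H w \<phi> \<notin> K'" using cover_filter_witness[OF Gs] by blast
      then show False using gen(3) K'(2) unfolding cover_values_def by blast
    qed
    moreover have "K \<subseteq> K'" using gen(2) K'(2) by blast
    ultimately have "K' \<in> eval UX (minval Gs) \<psi>"
      using K K'(1) by (auto simp: downclosure_def)
    then have "\<forall>\<^sub>F w in cover_filter Gs. eval H w \<psi> \<in> K'"
      using IH(2) K'(1) unfolding neg_approx_def by blast
    then obtain w where "covers Gs w" "eval H w \<psi> \<in> K'" using cover_filter_witness[OF Gs] by blast
    then show False using K'(3) unfolding cover_values_def by blast
  qed
qed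

lemma gen_filter_avoids_bot:
  assumes Gs: "support Gs" and neg: "SNeg \<in> L" and L: "syms \<phi> \<subseteq> L" and K: "K \<in> X"
    and none: "\<And>w. covers Gs w \<Longrightarrow> eval H w (FNeg \<phi>) \<notin> K"
  shows "gen_filter K (cover_values Gs \<phi>) \<inter> {bot H} = {}"
proof (rule ccontr)
  assume "gen_filter K (cover_values Gs \<phi>) \<inter> {bot H} \<noteq> {}"
  then obtain k w where k: "k \<in> K" "k \<sqinter> eval H w \<phi> \<preceq> bot H" and w: "covers Gs w"
    unfolding gen_filter_def cover_values_def by blast
  have S: "k \<in> S" "eval H w \<phi> \<in> S"
    using k filter_subset[OF dual_filter[OF K]] covers_eval_in_S w L by blast+
  then have "k \<preceq> neg H (eval H w \<phi>)"
    using k(2) residuation neg_eq_imp_bot bot_closed by simp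
  then have "eval H w (FNeg \<phi>) \<in> K" using filter_up[OF dual_filter[OF K] k(1)] neg_in_S[OF neg] S
    by simp
  then show False using none w by blast
qed

lemma neg_approx_neg:
  assumes Gs: "support Gs" and neg: "SNeg \<in> L" and L: "syms \<phi> \<subseteq> L"
    and sign: "positive \<phi>" and IH: "pos_approx Gs \<phi>"
  shows "neg_approx Gs (FNeg \<phi>)"
  unfolding neg_approx_def
proof (intro ballI impI)
  fix K assume K: "K \<in> X" "K \<in> eval UX (minval Gs) (FNeg \<phi>)"
  note gen = gen_filter[OF dual_filter[OF K(1)] cover_values_in_S[OF L]
      cover_values_down_directed[OF Gs sign]]
  have bot: "{bot H} \<subseteq> S" "up_directed {bot H}"
    using bot_in_S_if_neg[OF neg] singleton_directed bot_closed by auto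
  show "\<forall>\<^sub>F w in cover_filter Gs. eval H w (FNeg \<phi>) \<in> K"
  proof (rule ccontr)
    assume "\<not> ?thesis"
    then have "eval H w (FNeg \<phi>) \<notin> K" if "covers Gs w" for w
      using eventually_negative_in[OF Gs K(1), of "FNeg \<phi>"] that sign neg L by auto
    note disj = gen_filter_avoids_bot[OF Gs neg L K(1) this]
    obtain K' where K': "K' \<in> X" "gen_filter K (cover_values Gs \<phi>) \<subseteq> K'" "K' \<inter> {bot H} = {}"
      and max: "\<And>G. is_filter H S G \<Longrightarrow> K' \<subseteq> G \<Longrightarrow> G \<inter> {bot H} = {} \<Longrightarrow> G = K'"
      using filter_extension[OF gen(1) bot disj] by metis
    have "up_directed (S - K')" using dual_compl_directed_if_neg[OF neg K'(1)] max by blast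
    then have "separable Gs K'" using separable_if_compl_directed[OF Gs] by blast
    moreover have "K \<subseteq> K'" using gen(2) K'(2) by blast
    then have "K' \<notin> eval UX (minval Gs) \<phi>" using K K'(1) by (auto simp: downclosure_def)
    ultimately have "\<forall>\<^sub>F w in cover_filter Gs. eval H w \<phi> \<notin> K'"
      using IH K'(1) unfolding pos_approx_def by blast
    then obtain w where "covers Gs w" "eval H w \<phi> \<notin> K'" using cover_filter_witness[OF Gs] by blast
    then show False using gen(3) K'(2) unfolding cover_values_def by blast
  qed
qed

lemma minval_approx:
  assumes Gs: "support Gs"
  shows "syms \<rho> \<subseteq> L \<Longrightarrow> (positive \<rho> \<longrightarrow> pos_approx Gs \<rho>) \<and> (negative \<rho> \<longrightarrow> neg_approx Gs \<rho>)"
proof (induction \<rho>)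
  case (FVar x)
  then show ?case using pos_approx_var[OF Gs] by simp
next
  case (FAnd \<phi> \<psi>)
  then show ?case using pos_approx_and[OF Gs] neg_approx_and[OF Gs] by simp
next
  case (FOr \<phi> \<psi>)
  then show ?case using pos_approx_or[OF Gs] neg_approx_or[OF Gs] by simp
next
  case (FImp \<phi> \<psi>)
  then show ?case using pos_approx_imp[OF Gs] neg_approx_imp[OF Gs] by simp
next
  case (FNeg \<phi>)
  then show ?case using pos_approx_neg[OF Gs] neg_approx_neg[OF Gs] by simp
next
  case FBot
  then show ?case by (simp add: pos_approx_def neg_approx_def bot_notin_dual)
next
  case FTop
  then show ?case by (simp add: pos_approx_def neg_approx_def top_in_dual top_in_S)
qed

lemma antecedent_eventually_in:
  assumes Gs: "support Gs"
  shows "sahlqvist_antecedent \<alpha> \<Longrightarrow> syms \<alpha> \<subseteq> L \<Longrightarrow> G \<in> Gs \<Longrightarrow> G \<in> eval UX V \<alpha> \<Longrightarrow>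
    \<forall>\<^sub>F w in cover_filter Gs. eval H w \<alpha> \<in> G"
proof (induction \<alpha> rule: sahlqvist_antecedent.induct)
  case (sa_var x)
  then have "G \<in> Gs \<inter> V x" by simp
  then show ?case
    by (intro eventually_covers_mono[OF Gs always_eventually]) (auto simp: covers_def)
next
  case (sa_neg \<phi>)
  have GX: "G \<in> X" using sa_neg.prems(2) Gs unfolding support_def by blast
  have "G \<in> eval UX (minval Gs) \<phi>"
    using sa_neg eval_Up_mono[of "minval Gs" V \<phi>, OF minval_le_V] by blast
  then show ?case
    using minval_approx[OF Gs sa_neg.prems(1)] sa_neg.hyps GX unfolding neg_approx_def by blast
next
  case sa_bot
  then show ?case by simp
next
  case sa_top
  have "G \<in> X" using sa_top.prems(2) Gs unfolding support_def by blast
  then show ?case using sa_top.prems(1) by (simp add: top_in_dual top_in_S)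
next
  case (sa_and \<phi> \<psi>)
  then have "\<forall>\<^sub>F w in cover_filter Gs. eval H w \<phi> \<in> G \<and> eval H w \<psi> \<in> G"
    by (simp add: eventually_conj)
  moreover have "G \<in> X" using sa_and.prems(2) Gs unfolding support_def by blast
  ultimately show ?case
    using filter_meet[OF dual_filter] by (auto elim: eventually_mono)
next
  case (sa_or \<phi> \<psi>)
  have GX: "G \<in> X" using sa_or.prems(2) Gs unfolding support_def by blast
  have L: "SOr \<in> L" "syms \<phi> \<subseteq> L" "syms \<psi> \<subseteq> L" using sa_or.prems(1) by auto
  from sa_or have "(\<forall>\<^sub>F w in cover_filter Gs. eval H w \<phi> \<in> G)
      \<or> (\<forall>\<^sub>F w in cover_filter Gs. eval H w \<psi> \<in> G)"
    by auto
  then show ?case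
    by (elim disjE eventually_covers_mono[OF Gs])
      (simp_all add: dual_join_iff[OF L(1) GX] covers_eval_in_S L)
qed

lemma eventually_support_covers_mono:
  assumes "\<forall>\<^sub>F Gs in support_filter. \<forall>\<^sub>F w in cover_filter Gs. P Gs w"
    and "\<And>Gs w. support Gs \<Longrightarrow> covers Gs w \<Longrightarrow> P Gs w \<Longrightarrow> Q Gs w"
  shows "\<forall>\<^sub>F Gs in support_filter. \<forall>\<^sub>F w in cover_filter Gs. Q Gs w"
  using eventually_conj[OF eventually_support assms(1)]
  by (rule eventually_mono) (use eventually_covers_mono assms(2) in blast)

lemma positive_eventually_notin_F:
  assumes "positive \<chi>" "syms \<chi> \<subseteq> L" "F \<notin> eval UX V \<chi>"
  shows "\<forall>\<^sub>F Gs in support_filter. \<forall>\<^sub>F w in cover_filter Gs. eval H w \<chi> \<notin> F"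
proof -
  have "\<forall>\<^sub>F w in cover_filter Gs. eval H w \<chi> \<notin> F" if Gs: "support Gs" for Gs
  proof -
    have "F \<notin> eval UX (minval Gs) \<chi>"
      using assms(1,3) eval_Up_mono[of "minval Gs" V \<chi>, OF minval_le_V] by blast
    then show ?thesis
      using minval_approx[OF Gs assms(2)] assms(1) F_dual separable_F[OF Gs]
      unfolding pos_approx_def by blast
  qed
  then show ?thesis using eventually_support by (auto elim: eventually_mono)
qed

lemma neg_antecedent_eventually_notin_F:
  assumes "sahlqvist_antecedent \<alpha>" "syms (FNeg \<alpha>) \<subseteq> L" "F \<notin> eval UX V (FNeg \<alpha>)"
  shows "\<forall>\<^sub>F Gs in support_filter. \<forall>\<^sub>F w in cover_filter Gs. eval H w (FNeg \<alpha>) \<notin> F"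
proof -
  obtain G where G: "G \<in> eval UX V \<alpha>" "F \<subseteq> G"
    using assms(3) F_dual by (auto simp: downclosure_def)
  have GX: "G \<in> X" using G(1) eval_V_dual by blast
  have L: "syms \<alpha> \<subseteq> L" using assms(2) by simp
  have "\<forall>\<^sub>F Gs in support_filter. \<forall>\<^sub>F w in cover_filter Gs. eval H w \<alpha> \<in> G"
    using eventually_conj[OF eventually_support eventually_mem_support[OF GX G(2)]]
    by (rule eventually_mono) (use antecedent_eventually_in assms(1) L G(1) in blast)
  then show ?thesis
    by (rule eventually_support_covers_mono)
      (use dual_neg_notin[OF GX] covers_eval_in_S L G(2) in auto)
qed

lemma imp_antecedent_eventually_notin_F:
  assumes "sahlqvist_antecedent \<alpha>" "positive \<pi>" "syms (FImp \<alpha> \<pi>) \<subseteq> L"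
    and "F \<notin> eval UX V (FImp \<alpha> \<pi>)"
  shows "\<forall>\<^sub>F Gs in support_filter. \<forall>\<^sub>F w in cover_filter Gs. eval H w (FImp \<alpha> \<pi>) \<notin> F"
proof -
  obtain G where G: "G \<in> eval UX V \<alpha>" "G \<notin> eval UX V \<pi>" "F \<subseteq> G"
    using assms(4) F_dual by (auto simp: downclosure_def)
  have GX: "G \<in> X" using G(1) eval_V_dual by blast
  have L: "SImp \<in> L" "syms \<alpha> \<subseteq> L" "syms \<pi> \<subseteq> L" using assms(3) by auto
  have "\<forall>\<^sub>F w in cover_filter Gs. eval H w \<alpha> \<in> G \<and> eval H w \<pi> \<notin> G"
    if Gs: "support Gs" and GGs: "G \<in> Gs" for Gs
  proof (rule eventually_conj)
    show "\<forall>\<^sub>F w in cover_filter Gs. eval H w \<alpha> \<in> G"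
      using antecedent_eventually_in[OF Gs assms(1) L(2) GGs G(1)] .
    have "G \<notin> eval UX (minval Gs) \<pi>"
      using G(2) eval_Up_mono[of "minval Gs" V \<pi>, OF minval_le_V] assms(2) by blast
    moreover have "separable Gs G"
      using separable_if_compl_directed[OF Gs dual_compl_directed_if_imp[OF L(1) GX]] .
    ultimately show "\<forall>\<^sub>F w in cover_filter Gs. eval H w \<pi> \<notin> G"
      using minval_approx[OF Gs L(3)] assms(2) GX unfolding pos_approx_def by blast
  qed
  then have "\<forall>\<^sub>F Gs in support_filter. \<forall>\<^sub>F w in cover_filter Gs. eval H w \<alpha> \<in> G \<and> eval H w \<pi> \<notin> G"
    using eventually_conj[OF eventually_support eventually_mem_support[OF GX G(3)]]
    by (auto elim: eventually_mono)
  then show ?thesis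
    by (rule eventually_support_covers_mono)
      (use dual_imp_notin[OF GX] covers_eval_in_S L G(3) in auto)
qed

lemma body_eventually_notin_F:
  "sahlqvist_body \<phi> \<Longrightarrow> syms \<phi> \<subseteq> L \<Longrightarrow> F \<notin> eval UX V \<phi> \<Longrightarrow>
    \<forall>\<^sub>F Gs in support_filter. \<forall>\<^sub>F w in cover_filter Gs. eval H w \<phi> \<notin> F"
proof (induction \<phi> rule: sahlqvist_body.induct)
  case (sb_imp \<chi>)
  then show ?case
    using positive_eventually_notin_F neg_antecedent_eventually_notin_F
      imp_antecedent_eventually_notin_F
    unfolding sahlqvist_implication_def by blast
next
  case (sb_and \<phi> \<psi>)
  have L: "syms \<phi> \<subseteq> L" "syms \<psi> \<subseteq> L" using sb_and.prems(1) by auto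
  from sb_and have "(\<forall>\<^sub>F Gs in support_filter. \<forall>\<^sub>F w in cover_filter Gs. eval H w \<phi> \<notin> F)
      \<or> (\<forall>\<^sub>F Gs in support_filter. \<forall>\<^sub>F w in cover_filter Gs. eval H w \<psi> \<notin> F)"
    by auto
  then show ?case
    by (elim disjE eventually_support_covers_mono)
      (simp_all add: filter_meet_iff[OF dual_filter[OF F_dual]] covers_eval_in_S L)
next
  case (sb_or \<phi> \<psi>)
  have L: "SOr \<in> L" "syms \<phi> \<subseteq> L" "syms \<psi> \<subseteq> L" using sb_or.prems(1) by auto
  from sb_or have "\<forall>\<^sub>F Gs in support_filter. (\<forall>\<^sub>F w in cover_filter Gs. eval H w \<phi> \<notin> F)
      \<and> (\<forall>\<^sub>F w in cover_filter Gs. eval H w \<psi> \<notin> F)"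
    by (auto intro: eventually_conj)
  then have "\<forall>\<^sub>F Gs in support_filter.
      \<forall>\<^sub>F w in cover_filter Gs. eval H w \<phi> \<notin> F \<and> eval H w \<psi> \<notin> F"
    by (rule eventually_mono) (auto intro: eventually_conj)
  then show ?case
    by (rule eventually_support_covers_mono)
      (simp add: dual_join_iff[OF L(1) F_dual] covers_eval_in_S L)
qed

lemma refuting_valuation:
  assumes "\<forall>\<phi>\<in>set \<phi>s. sahlqvist_body \<phi> \<and> syms \<phi> \<subseteq> L \<and> F \<notin> eval UX V \<phi>"
  shows "\<exists>w. (\<forall>x. w x \<in> S) \<and> (\<forall>\<phi>\<in>set \<phi>s. eval H w \<phi> \<notin> F)"
proof -
  have "\<forall>\<phi>\<in>set \<phi>s. \<forall>\<^sub>F Gs in support_filter. \<forall>\<^sub>F w in cover_filter Gs. eval H w \<phi> \<notin> F"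
    using assms body_eventually_notin_F by blast
  then have "\<forall>\<^sub>F Gs in support_filter. \<forall>\<phi>\<in>set \<phi>s. \<forall>\<^sub>F w in cover_filter Gs. eval H w \<phi> \<notin> F"
    by (rule eventually_ball_finite[OF finite_set])
  then have "\<forall>\<^sub>F Gs in support_filter. \<forall>\<^sub>F w in cover_filter Gs. \<forall>\<phi>\<in>set \<phi>s. eval H w \<phi> \<notin> F"
    by (rule eventually_mono) (rule eventually_ball_finite[OF finite_set])
  then obtain Gs where "support Gs" "\<forall>\<^sub>F w in cover_filter Gs. \<forall>\<phi>\<in>set \<phi>s. eval H w \<phi> \<notin> F"
    using support_filter_witness by blast
  then obtain w where "covers Gs w" "\<forall>\<phi>\<in>set \<phi>s. eval H w \<phi> \<notin> F"
    using cover_filter_witness by blast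
  then show ?thesis using covers_in_S by blast
qed

end

lemma eval_cong: "(\<And>x. x \<in> vars \<phi> \<Longrightarrow> v x = v' x) \<Longrightarrow> eval G v \<phi> = eval G v' \<phi>"
  by (induction \<phi>) auto

context L_subreduct
begin

lemma qeq_valid_premise_in_dual:
  assumes sq: "sahlqvist_qeq (QEq \<phi>s y z)" and lang: "qeq_in_language L (QEq \<phi>s y z)"
    and valid: "qeq_valid H S (QEq \<phi>s y z)" and F: "F \<in> X" and w: "\<forall>x. w x \<in> S"
  shows "\<exists>\<phi>\<in>set \<phi>s. eval H w \<phi> \<in> F"
proof (rule ccontr)
  assume "\<not> ?thesis"
  then have "eval H w \<phi> \<in> S - F" if "\<phi> \<in> set \<phi>s" for \<phi>
    using that w lang eval_in_S by auto
  then have "(\<lambda>\<phi>. eval H w \<phi>) ` set \<phi>s \<subseteq> S - F" by blast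
  from dual_finite_bound[OF F finite_imageI[OF finite_set] this]
  obtain f c where fc: "f \<in> F" "c \<in> S - F" "\<forall>\<phi>\<in>set \<phi>s. f \<sqinter> eval H w \<phi> \<preceq> c"
    by auto
  have fS: "f \<in> S" using fc(1) filter_subset[OF dual_filter[OF F]] by blast
  define u where "u = w(y := f, z := c)"
  have "y \<noteq> z" using sq by simp
  then have u: "\<forall>x. u x \<in> S" "u y = f" "u z = c" using w fS fc(2) by (simp_all add: u_def)
  have "eval H u \<phi> \<sqinter> u y \<preceq> u z" if \<phi>: "\<phi> \<in> set \<phi>s" for \<phi>
  proof -
    have "eval H u \<phi> = eval H w \<phi>"
      using \<phi> sq by (intro eval_cong) (auto simp: u_def)
    moreover have "eval H w \<phi> \<in> S" using eval_in_S lang w \<phi> by simp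
    moreover have "f \<sqinter> eval H w \<phi> \<preceq> c" using fc(3) \<phi> by blast
    ultimately show ?thesis using meet_comm[of f "eval H w \<phi>"] fS u(2,3) by simp
  qed
  then have "u y \<preceq> u z" using valid u(1) by simp
  then have "f \<preceq> c" using u by simp
  then show False using filter_up[OF dual_filter[OF F] fc(1)] fc(2) by blast
qed

lemma dual_valid_if_qeq_valid:
  assumes sq: "sahlqvist_qeq (QEq \<phi>s y z)" and lang: "qeq_in_language L (QEq \<phi>s y z)"
    and valid: "qeq_valid H S (QEq \<phi>s y z)"
  shows "qeq_valid (Up X (\<subseteq>)) (upsets X (\<subseteq>)) (QEq \<phi>s y z)"
  unfolding qeq_valid.simps Up_simps alg_le_Up
proof (intro allI impI)
  fix V assume V: "\<forall>x. V x \<in> upsets X (\<subseteq>)"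
    and prem: "\<forall>\<phi>\<in>set \<phi>s. eval (Up X (\<subseteq>)) V \<phi> \<inter> V y \<subseteq> V z"
  show "V y \<subseteq> V z"
  proof
    fix F assume F: "F \<in> V y"
    then have FX: "F \<in> X" using V unfolding upsets_def by blast
    interpret canonicity H L S V F
      using V FX by unfold_locales simp_all
    show "F \<in> V z"
    proof (rule ccontr)
      assume "F \<notin> V z"
      then have "\<forall>\<phi>\<in>set \<phi>s. sahlqvist_body \<phi> \<and> syms \<phi> \<subseteq> L \<and> F \<notin> eval UX V \<phi>"
        using prem F sq lang by auto
      then obtain w where "\<forall>x. w x \<in> S" "\<forall>\<phi>\<in>set \<phi>s. eval H w \<phi> \<notin> F"
        using refuting_valuation by blast
      then show False using qeq_valid_premise_in_dual[OF sq lang valid FX] by blast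
    qed
  qed
qed

end

section \<open>Transfer along order embeddings\<close>

lemma fo_holds_cong:
  "\<forall>x\<in>fo_free \<tau>. g x = g' x \<Longrightarrow> fo_holds Y le g \<tau> = fo_holds Y le g' \<tau>"
proof (induction \<tau> arbitrary: g g')
  case (FO_Conj \<tau>1 \<tau>2)
  have "fo_holds Y le g \<tau>1 = fo_holds Y le g' \<tau>1" by (rule FO_Conj.IH(1))
    (use FO_Conj.prems in simp)
  moreover have "fo_holds Y le g \<tau>2 = fo_holds Y le g' \<tau>2" by (rule FO_Conj.IH(2))
    (use FO_Conj.prems in simp)
  ultimately show ?case by simp
next
  case (FO_Disj \<tau>1 \<tau>2)
  have "fo_holds Y le g \<tau>1 = fo_holds Y le g' \<tau>1" by (rule FO_Disj.IH(1))
    (use FO_Disj.prems in simp)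
  moreover have "fo_holds Y le g \<tau>2 = fo_holds Y le g' \<tau>2" by (rule FO_Disj.IH(2))
    (use FO_Disj.prems in simp)
  ultimately show ?case by simp
next
  case (FO_Impl \<tau>1 \<tau>2)
  have "fo_holds Y le g \<tau>1 = fo_holds Y le g' \<tau>1" by (rule FO_Impl.IH(1))
    (use FO_Impl.prems in simp)
  moreover have "fo_holds Y le g \<tau>2 = fo_holds Y le g' \<tau>2" by (rule FO_Impl.IH(2))
    (use FO_Impl.prems in simp)
  ultimately show ?case by simp
next
  case (FO_Ex x \<tau>)
  then have "fo_holds Y le (g(x := d)) \<tau> = fo_holds Y le (g'(x := d)) \<tau>" for d by simp
  then show ?case by simp
next
  case (FO_All x \<tau>)
  then have "fo_holds Y le (g(x := d)) \<tau> = fo_holds Y le (g'(x := d)) \<tau>" for d by simp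
  then show ?case by simp
qed simp_all

lemma fo_holds_image:
  assumes "inj f" and order: "\<And>a b. lp (f a) (f b) \<longleftrightarrow> le a b"
  shows "fo_holds (f ` Y) lp (f \<circ> g) \<tau> = fo_holds Y le g \<tau>"
proof (induction \<tau> arbitrary: g)
  case (FO_Eq x y)
  then show ?case using \<open>inj f\<close> by (simp add: inj_eq)
next
  case (FO_Ex x \<tau>)
  have "fo_holds (f ` Y) lp ((f \<circ> g)(x := f d)) \<tau> = fo_holds Y le (g(x := d)) \<tau>" for d
    using FO_Ex.IH[of "g(x := d)"] by (simp only: fun_upd_comp)
  moreover have "(\<exists>d\<in>f ` Y. P d) \<longleftrightarrow> (\<exists>d\<in>Y. P (f d))" for P by blast
  ultimately show ?case by (simp only: fo_holds.simps)
next
  case (FO_All x \<tau>)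
  have "fo_holds (f ` Y) lp ((f \<circ> g)(x := f d)) \<tau> = fo_holds Y le (g(x := d)) \<tau>" for d
    using FO_All.IH[of "g(x := d)"] by (simp only: fun_upd_comp)
  moreover have "(\<forall>d\<in>f ` Y. P d) \<longleftrightarrow> (\<forall>d\<in>Y. P (f d))" for P by blast
  ultimately show ?case by (simp only: fo_holds.simps)
qed (simp_all add: order)

lemma fo_models_image:
  assumes "inj f" "\<And>a b. lp (f a) (f b) \<longleftrightarrow> le a b" "fo_sentence \<tau>"
  shows "fo_models (f ` Y) lp \<tau> \<longleftrightarrow> fo_models Y le \<tau>"
proof -
  have "fo_models (f ` Y) lp \<tau> \<longleftrightarrow> fo_holds (f ` Y) lp (f \<circ> (\<lambda>_. undefined)) \<tau>"
    unfolding fo_models_def using fo_holds_cong[of \<tau>] assms(3) unfolding fo_sentence_def by simp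
  then show ?thesis unfolding fo_models_def
    using fo_holds_image[where f=f and lp=lp and le=le, OF assms(1,2)] by simp
qed

lemma downclosure_image:
  assumes "\<And>a b. lp (f a) (f b) \<longleftrightarrow> le a b" "U \<subseteq> Y"
  shows "downclosure (f ` Y) lp (f ` U) = f ` downclosure Y le U"
  using assms unfolding downclosure_def by auto

lemma eval_Up_image:
  assumes "inj f" "\<And>a b. lp (f a) (f b) \<longleftrightarrow> le a b" "\<And>x. v x \<subseteq> Y"
  shows "eval (Up (f ` Y) lp) (\<lambda>x. f ` v x) \<phi> = f ` eval (Up Y le) v \<phi>"
proof (induction \<phi>)
  case (FAnd \<phi> \<psi>)
  then show ?case using assms(1) by (simp add: image_Int)
next
  case (FOr \<phi> \<psi>)
  then show ?case by (simp add: image_Un)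
next
  case (FImp \<phi> \<psi>)
  let ?D = "eval (Up Y le) v \<phi> - eval (Up Y le) v \<psi>"
  have "?D \<subseteq> Y" using eval_Up_subset assms(3) by blast
  have "eval (Up (f ` Y) lp) (\<lambda>x. f ` v x) (FImp \<phi> \<psi>) = f ` Y - downclosure (f ` Y) lp (f ` ?D)"
    using FImp assms(1) by (simp add: image_set_diff)
  also have "\<dots> = f ` (Y - downclosure Y le ?D)"
    using downclosure_image[where f=f and lp=lp and le=le, OF assms(2) \<open>?D \<subseteq> Y\<close>] assms(1)
    by (simp add: image_set_diff)
  finally show ?case by simp
next
  case (FNeg \<phi>)
  have "eval (Up Y le) v \<phi> \<subseteq> Y" using eval_Up_subset assms(3) by blast
  then show ?case
    using FNeg downclosure_image[where f=f and lp=lp and le=le, OF assms(2)] assms(1)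
    by (simp add: image_set_diff)
qed simp_all

lemma qeq_valid_Up_image:
  assumes inj: "inj f" and order: "\<And>a b. lp (f a) (f b) \<longleftrightarrow> le a b"
  shows "qeq_valid (Up (f ` Y) lp) (upsets (f ` Y) lp) (QEq \<phi>s y z)
    \<longleftrightarrow> qeq_valid (Up Y le) (upsets Y le) (QEq \<phi>s y z)"
proof -
  let ?holds = "\<lambda>Z lz v. (\<forall>\<phi>\<in>set \<phi>s. eval (Up Z lz) v \<phi> \<inter> v y \<subseteq> v z) \<longrightarrow> v y \<subseteq> v z"
  have transfer: "?holds (f ` Y) lp (\<lambda>x. f ` v x) \<longleftrightarrow> ?holds Y le v" if "\<forall>x. v x \<in> upsets Y le" for v
  proof -
    have "\<And>x. v x \<subseteq> Y" using that unfolding upsets_def by blast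
    then have "eval (Up (f ` Y) lp) (\<lambda>x. f ` v x) \<phi> = f ` eval (Up Y le) v \<phi>" for \<phi>
      using eval_Up_image[where f=f and lp=lp and le=le, OF inj order] by blast
    then show ?thesis using inj by (simp add: image_Int[OF inj, symmetric] inj_image_subset_iff)
  qed
  show ?thesis
  proof
    assume valid: "qeq_valid (Up (f ` Y) lp) (upsets (f ` Y) lp) (QEq \<phi>s y z)"
    have "?holds (f ` Y) lp (\<lambda>x. f ` v x)" if "\<forall>x. v x \<in> upsets Y le" for v
    proof -
      have "\<forall>x. f ` v x \<in> upsets (f ` Y) lp" using that order unfolding upsets_def by auto
      then show ?thesis
        using valid[unfolded qeq_valid.simps Up_simps alg_le_Up, rule_format, of "\<lambda>x. f ` v x"]
          by simp
    qed
    then show "qeq_valid (Up Y le) (upsets Y le) (QEq \<phi>s y z)" using transfer by simp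
  next
    assume valid: "qeq_valid (Up Y le) (upsets Y le) (QEq \<phi>s y z)"
    show "qeq_valid (Up (f ` Y) lp) (upsets (f ` Y) lp) (QEq \<phi>s y z)"
      unfolding qeq_valid.simps Up_simps alg_le_Up
    proof (rule allI, rule impI)
      fix v' :: "nat \<Rightarrow> 'b set" assume v': "\<forall>x. v' x \<in> upsets (f ` Y) lp"
      define v where "v x = f -` v' x \<inter> Y" for x
      have v: "\<forall>x. v x \<in> upsets Y le" using v' order unfolding v_def upsets_def by auto
      have "v' x = f ` v x" for x using v' unfolding v_def upsets_def by blast
      then have "v' = (\<lambda>x. f ` v x)" by blast
      then show "?holds (f ` Y) lp v'" using transfer[OF v] valid v by simp
    qed
  qed
qed

theorem corollary5p12:
  fixes L :: "sym set" and \<Phi> :: qeq and H :: "'a alg" and S :: "'a set" and \<tau> :: fo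
  assumes "SAnd \<in> L"
    and "sahlqvist_qeq \<Phi>"
    and "qeq_in_language L \<Phi>"
    and "subreduct L H S"
    and "correspondent TYPE('a set set) \<Phi> \<tau>"
  shows "qeq_valid H S \<Phi> \<longleftrightarrow> fo_models (dual_poset H S) (\<subseteq>) \<tau>"
proof -
  interpret L_subreduct H L S
    using assms(1,4) by unfold_locales (simp_all add: subreduct_def)
  obtain \<phi>s y z where \<Phi>: "\<Phi> = QEq \<phi>s y z" by (cases \<Phi>)
  define f :: "'a set \<Rightarrow> 'a set set" where "f K = {K}" for K
  define lp :: "'a set set \<Rightarrow> 'a set set \<Rightarrow> bool" where "lp U U' \<longleftrightarrow> \<Union>U \<subseteq> \<Union>U'" for U U'
  have f: "inj f" "\<And>K K'. lp (f K) (f K') \<longleftrightarrow> K \<subseteq> K'" unfolding f_def lp_def inj_def by simp_all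
  have "is_poset (f ` X) lp" unfolding is_poset_def f_def lp_def by auto
  have "qeq_valid H S \<Phi> \<longleftrightarrow> qeq_valid (Up X (\<subseteq>)) (upsets X (\<subseteq>)) \<Phi>"
    using qeq_valid_if_dual_valid dual_valid_if_qeq_valid assms(2,3) unfolding \<Phi> by blast
  also have "\<dots> \<longleftrightarrow> qeq_valid (Up (f ` X) lp) (upsets (f ` X) lp) \<Phi>"
    unfolding \<Phi> using qeq_valid_Up_image[where f=f and lp=lp and le="(\<subseteq>)", OF f] by simp
  also have "\<dots> \<longleftrightarrow> fo_models (f ` X) lp \<tau>"
    using assms(5) \<open>is_poset (f ` X) lp\<close> unfolding correspondent_def by blast
  also have "\<dots> \<longleftrightarrow> fo_models X (\<subseteq>) \<tau>"
    using fo_models_image[where f=f and lp=lp and le="(\<subseteq>)", OF f] assms(5)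
    unfolding correspondent_def by blast
  finally show ?thesis .
qed

end
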